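(* Let $\mathcal M$ be a Hilbert space of $\mathcal Y$-valued functions on the unit ball $\mathbb B^d\subset\mathbb C^d$, and suppose there exist $T_1,\dots,T_d\in\mathcal L(\mathcal M)$ such that for every $f\in\mathcal M$ $$f(\boldsymbol\lambda)-f(0)=\sum_{j=1}^d\lambda_j(T_jf)(\boldsymbol\lambda)\ \ (\boldsymbol\lambda\in\mathbb B^d)\quad\text{and}\quad\sum_{j=1}^d\|T_jf\|^2_{\mathcal M}\le\|f\|^2_{\mathcal M}-\|f(0)\|^2_{\mathcal Y}.$$ Then $\mathcal M$ is isometrically equal to a space $\mathcal H(K^{\mathbf a}_{C,\mathbf A})$ for some contractive pair $(C,\mathbf A)$; consequently $\mathcal M$ is contractively included in the Arveson space $\mathcal H_{\mathcal Y}(k_d)$.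
   Context: For a Hilbert space $\mathcal X$, $C\in\mathcal L(\mathcal X,\mathcal Y)$, $\mathbf A=(A_1,\dots,A_d)\in\mathcal L(\mathcal X)^d$: $(C,\mathbf A)$ is contractive if $C^*C+\sum_jA_j^*A_j\le I$. $\mathcal F_d$: free semigroup of words on $\{1,\dots,d\}$, $\mathbf A^v=A_{i_N}\cdots A_{i_1}$; abelianization $\mathbf a\colon\mathcal F_d\to\mathbb Z^d_+$ counts letter occurrences; $|\mathbf n|=\sum n_k$, $\mathbf n!=\prod n_k!$, $\boldsymbol\lambda^{\mathbf n}=\prod\lambda_k^{n_k}$. Arveson space $\mathcal H_{\mathcal Y}(k_d)$: functions $\sum_{\mathbf n}f_{\mathbf n}\boldsymbol\lambda^{\mathbf n}$ on $\mathbb B^d$ with $\|f\|^2=\sum_{\mathbf n}\frac{\mathbf n!}{|\mathbf n|!}\|f_{\mathbf n}\|^2<\infty$. $\widehat{\mathcal O}^{\mathbf a}_{C,\mathbf A}x=\sum_{\mathbf n}\big(\sum_{v\in\mathbf a^{-1}(\mathbf n)}C\mathbf A^vx\big)\boldsymbol\lambda^{\mathbf n}=C(I-\sum_j\lambda_jA_j)^{-1}x$, $\mathcal G^{\mathbf a}_{C,\mathbf A}=(\widehat{\mathcal O}^{\mathbf a}_{C,\mathbf A})^*\widehat{\mathcal O}^{\mathbf a}_{C,\mathbf A}$, $Q^{\mathbf a}$ the orthogonal projection onto $(\operatorname{Ker}\mathcal G^{\mathbf a}_{C,\mathbf A})^\perp$; $\mathcal H(K^{\mathbf a}_{C,\mathbf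 A})$ is $\operatorname{Ran}\widehat{\mathcal O}^{\mathbf a}_{C,\mathbf A}$ with norm $\|\widehat{\mathcal O}^{\mathbf a}_{C,\mathbf A}x\|=\|Q^{\mathbf a}x\|_{\mathcal X}$ (the reproducing kernel Hilbert space with kernel $C(I-\sum\lambda_jA_j)^{-1}(I-\sum\overline{\zeta_j}A_j^* )^{-1}C^*$). Contractive inclusion: $\mathcal M\subseteq\mathcal H_{\mathcal Y}(k_d)$ and $\|f\|_{\mathcal H_{\mathcal Y}(k_d)}\le\|f\|_{\mathcal M}$. *)

theory Defs
  imports "HOL-Analysis.Analysis" "HOL-Library.Function_Algebras"
begin

class cvector = ab_group_add +
  fixes scaleC :: "complex \<Rightarrow> 'a \<Rightarrow> 'a" (infixr "*\<^sub>C" 75)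
  assumes scaleC_add_right: "a *\<^sub>C (x + y) = a *\<^sub>C x + a *\<^sub>C y"
    and scaleC_add_left: "(a + b) *\<^sub>C x = a *\<^sub>C x + b *\<^sub>C x"
    and scaleC_scaleC: "a *\<^sub>C (b *\<^sub>C x) = (a * b) *\<^sub>C x"
    and scaleC_one: "1 *\<^sub>C x = x"

instantiation "fun" :: (type, cvector) cvector
begin
definition scaleC_fun :: "complex \<Rightarrow> ('a \<Rightarrow> 'b) \<Rightarrow> 'a \<Rightarrow> 'b" where
  "scaleC_fun a f = (\<lambda>z. a *\<^sub>C f z)"
instance
  by standard (simp_all add: scaleC_fun_def fun_eq_iff scaleC_add_right scaleC_add_left
                  scaleC_scaleC scaleC_one)
end

text \<open>Norm induced by an inner product (inner products are linear in the first argument).\<close>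
definition hnorm :: "('a \<Rightarrow> 'a \<Rightarrow> complex) \<Rightarrow> 'a \<Rightarrow> real" where
  "hnorm ip x = sqrt (Re (ip x x))"

definition is_hilbert :: "'a::cvector set \<Rightarrow> ('a \<Rightarrow> 'a \<Rightarrow> complex) \<Rightarrow> bool" where
  "is_hilbert V ip \<longleftrightarrow>
     0 \<in> V \<and> (\<forall>x\<in>V. \<forall>y\<in>V. x + y \<in> V) \<and> (\<forall>a. \<forall>x\<in>V. a *\<^sub>C x \<in> V)
   \<and> (\<forall>x\<in>V. \<forall>y\<in>V. \<forall>z\<in>V. ip (x + y) z = ip x z + ip y z)
   \<and> (\<forall>a. \<forall>x\<in>V. \<forall>y\<in>V. ip (a *\<^sub>C x) y = a * ip x y)
   \<and> (\<forall>x\<in>V. \<forall>y\<in>V. ip x y = cnj (ip y x))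
   \<and> (\<forall>x\<in>V. 0 \<le> Re (ip x x))
   \<and> (\<forall>x\<in>V. ip x x = 0 \<longrightarrow> x = 0)
   \<and> (\<forall>s. (\<forall>n. s n \<in> V) \<and> (\<forall>e>0. \<exists>N. \<forall>m\<ge>N. \<forall>n\<ge>N. hnorm ip (s m - s n) < e)
          \<longrightarrow> (\<exists>l\<in>V. (\<lambda>n. hnorm ip (s n - l)) \<longlonglongrightarrow> 0))"

text \<open>Complex Hilbert spaces as types (used for the coefficient space Y).\<close>
class chilbert = cvector +
  fixes cinner :: "'a \<Rightarrow> 'a \<Rightarrow> complex"
  assumes cinner_add_left: "cinner (x + y) z = cinner x z + cinner y z"
    and cinner_scaleC_left: "cinner (a *\<^sub>C x) y = a * cinner x y"
    and cinner_commute: "cinner x y = cnj (cinner y x)"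
    and cinner_nonneg: "0 \<le> Re (cinner x x)"
    and cinner_eq_zero: "cinner x x = 0 \<Longrightarrow> x = 0"
    and cinner_complete: "(\<forall>e>0. \<exists>N. \<forall>m\<ge>N. \<forall>n\<ge>N. sqrt (Re (cinner (s m - s n) (s m - s n))) < e)
          \<Longrightarrow> (\<exists>l. (\<lambda>n. sqrt (Re (cinner (s n - l) (s n - l)))) \<longlonglongrightarrow> 0)"

definition ynorm :: "'a::chilbert \<Rightarrow> real" where
  "ynorm x = hnorm cinner x"

definition is_blin :: "'a::cvector set \<Rightarrow> ('a \<Rightarrow> 'a \<Rightarrow> complex) \<Rightarrow>
    'b::cvector set \<Rightarrow> ('b \<Rightarrow> 'b \<Rightarrow> complex) \<Rightarrow> ('a \<Rightarrow> 'b) \<Rightarrow> bool" where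
  "is_blin V ipV W ipW T \<longleftrightarrow>
     (\<forall>x\<in>V. T x \<in> W) \<and> (\<forall>x\<in>V. \<forall>y\<in>V. T (x + y) = T x + T y)
   \<and> (\<forall>a. \<forall>x\<in>V. T (a *\<^sub>C x) = a *\<^sub>C T x)
   \<and> (\<exists>K. \<forall>x\<in>V. hnorm ipW (T x) \<le> K * hnorm ipV x)"

text \<open>(C, A) contractive: C*C + sum_j A_j*A_j \<le> I, i.e. for all x,
  <(C*C + sum A_j*A_j) x, x> = |Cx|^2 + sum |A_j x|^2 \<le> |x|^2.\<close>
definition contractive_pair :: "'x::cvector set \<Rightarrow> ('x \<Rightarrow> 'x \<Rightarrow> complex) \<Rightarrow>
    ('x \<Rightarrow> 'y::chilbert) \<Rightarrow> ('d::finite \<Rightarrow> 'x \<Rightarrow> 'x) \<Rightarrow> bool" where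
  "contractive_pair X ipX C A \<longleftrightarrow>
     (\<forall>x\<in>X. (ynorm (C x))\<^sup>2 + (\<Sum>j\<in>UNIV. (hnorm ipX (A j x))\<^sup>2) \<le> (hnorm ipX x)\<^sup>2)"

text \<open>Functions on the unit ball of C^d are represented as functions on complex^'d
  that vanish outside the open unit ball.
  Observability operator: (O x)(lam) = C (I - sum_j lam_j A_j)^{-1} x.\<close>
definition obs :: "'x::cvector set \<Rightarrow> ('x \<Rightarrow> 'y::chilbert) \<Rightarrow> ('d::finite \<Rightarrow> 'x \<Rightarrow> 'x) \<Rightarrow>
    'x \<Rightarrow> (complex^'d \<Rightarrow> 'y)" where
  "obs X C A x = (\<lambda>lam. if norm lam < 1
      then C (THE z. z \<in> X \<and> z - (\<Sum>j\<in>UNIV. (lam $ j) *\<^sub>C A j z) = x) else 0)"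

definition orth_compl :: "'x set \<Rightarrow> ('x \<Rightarrow> 'x \<Rightarrow> complex) \<Rightarrow> 'x set \<Rightarrow> 'x set" where
  "orth_compl X ip S = {y\<in>X. \<forall>s\<in>S. ip y s = 0}"

definition orth_proj :: "('x::cvector \<Rightarrow> 'x \<Rightarrow> complex) \<Rightarrow> 'x set \<Rightarrow> 'x \<Rightarrow> 'x" where
  "orth_proj ip S x = (THE q. q \<in> S \<and> (\<forall>s\<in>S. ip (x - q) s = 0))"

text \<open>Q^a: orthogonal projection onto (Ker G)^perp, where Ker G = Ker O
  (since G = O* O).\<close>
definition Qa :: "'x::cvector set \<Rightarrow> ('x \<Rightarrow> 'x \<Rightarrow> complex) \<Rightarrow> ('x \<Rightarrow> 'y::chilbert) \<Rightarrow>
    ('d::finite \<Rightarrow> 'x \<Rightarrow> 'x) \<Rightarrow> 'x \<Rightarrow> 'x" where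
  "Qa X ipX C A = orth_proj ipX (orth_compl X ipX {x\<in>X. obs X C A x = 0})"

definition mono_pow :: "complex^'d \<Rightarrow> ('d::finite \<Rightarrow> nat) \<Rightarrow> complex" where
  "mono_pow lam n = (\<Prod>j\<in>UNIV. (lam $ j) ^ (n j))"

definition mfact_ratio :: "('d::finite \<Rightarrow> nat) \<Rightarrow> real" where
  "mfact_ratio n = (\<Prod>j\<in>UNIV. fact (n j)) / fact (\<Sum>j\<in>UNIV. n j)"

definition yhas_sum :: "('i \<Rightarrow> 'y::chilbert) \<Rightarrow> 'i set \<Rightarrow> 'y \<Rightarrow> bool" where
  "yhas_sum f S l \<longleftrightarrow> (\<forall>e>0. \<exists>F. finite F \<and> F \<subseteq> S \<and>
      (\<forall>G. finite G \<and> F \<subseteq> G \<and> G \<subseteq> S \<longrightarrow> ynorm (sum f G - l) < e))"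

definition arv_rep :: "(complex^'d::finite \<Rightarrow> 'y::chilbert) \<Rightarrow> (('d \<Rightarrow> nat) \<Rightarrow> 'y) \<Rightarrow> bool" where
  "arv_rep f c \<longleftrightarrow>
     (\<lambda>n. mfact_ratio n * (ynorm (c n))\<^sup>2) summable_on UNIV
   \<and> (\<forall>lam. norm lam < 1 \<longrightarrow> yhas_sum (\<lambda>n. mono_pow lam n *\<^sub>C c n) UNIV (f lam))
   \<and> (\<forall>lam. \<not> norm lam < 1 \<longrightarrow> f lam = 0)"

definition arveson :: "(complex^'d::finite \<Rightarrow> 'y::chilbert) set" where
  "arveson = {f. \<exists>c. arv_rep f c}"

definition arv_norm :: "(complex^'d::finite \<Rightarrow> 'y::chilbert) \<Rightarrow> real" where
  "arv_norm f = sqrt (\<Sum>\<^sub>\<infinity>n. mfact_ratio n * (ynorm ((THE c. arv_rep f c) n))\<^sup>2)"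

end

(* Take X = M, C f = f(0) and A = T.  By the contractivity hypothesis and Cauchy-Schwarz,
   T(lam) = sum_j lam_j T_j has norm at most |lam| < 1 on the ball, so I - T(lam) is invertible
   on M, and the Gleason identity says (z - T(lam) z)(lam) = z(0).  Hence
   C (I - T(lam))^-1 h = h(lam): the observability operator is the identity of M, its kernel is
   trivial and Q^a = I.

   For the inclusion, iterating the Gleason identity gives
   f(lam) = sum_{|n| < N} f_n lam^n + (T(lam)^N f)(lam), with f_n = (sum_{a(v) = n} T^v f)(0)
   and a remainder of size O(|lam|^N).  Weighted Cauchy-Schwarz and contractivity show that
   E_k = sum_{|n| = k} n!/|n|! ||sum_{a(v) = n} T^v f||^2 satisfies
   E_(k+1) + sum_{|n| = k} n!/|n|! ||f_n||^2 <= E_k, and E_0 = ||f||^2, so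
   sum_n n!/|n|! ||f_n||^2 <= ||f||^2.  Coefficients of an Arveson expansion are unique (a
   Kronecker substitution reduces this to power series in one variable), so the left-hand side
   is the squared Arveson norm of f. *)

theory Submission
  imports Defs
begin

section \<open>Hilbert spaces on a carrier set\<close>

lemma scaleC_zero_left [simp]: "(0::complex) *\<^sub>C (x::'a::cvector) = 0"
  using scaleC_add_left[of 0 0 x] by simp

lemma scaleC_zero_right [simp]: "a *\<^sub>C (0::'a::cvector) = 0"
  using scaleC_add_right[of a 0 0] by simp

lemma scaleC_minus1_left: "(-1) *\<^sub>C (x::'a::cvector) = - x"
  using scaleC_add_left[of 1 "-1" x] by (simp add: scaleC_one add_eq_0_iff)

lemma scaleC_minus_right: "a *\<^sub>C (- x::'a::cvector) = - (a *\<^sub>C x)"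
  by (metis scaleC_minus1_left scaleC_scaleC mult.commute)

lemma scaleC_diff_right: "a *\<^sub>C (x - y::'a::cvector) = a *\<^sub>C x - a *\<^sub>C y"
  by (metis diff_conv_add_uminus scaleC_add_right scaleC_minus_right)

lemma scaleC_sum_right: "a *\<^sub>C (\<Sum>i\<in>A. f i) = (\<Sum>i\<in>A. a *\<^sub>C (f i::'a::cvector))"
  by (induction A rule: infinite_finite_induct) (auto simp: scaleC_add_right)

lemma sum_apply: "(\<Sum>i\<in>A. f i) x = (\<Sum>i\<in>A. f i x)"
  by (induction A rule: infinite_finite_induct) auto

lemma scaleC_fun_apply [simp]: "(a *\<^sub>C f) x = a *\<^sub>C (f x :: 'b::cvector)"
  by (simp add: scaleC_fun_def)

locale hilbert_on =
  fixes V :: "'a::cvector set" and ip :: "'a \<Rightarrow> 'a \<Rightarrow> complex"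
  assumes is_hilbert: "is_hilbert V ip"
begin

lemma zero_mem [simp]: "0 \<in> V"
  using is_hilbert unfolding is_hilbert_def by (elim conjE)

lemma add_mem [simp]: "x \<in> V \<Longrightarrow> y \<in> V \<Longrightarrow> x + y \<in> V"
  using is_hilbert unfolding is_hilbert_def by (elim conjE) metis

lemma scaleC_mem [simp]: "x \<in> V \<Longrightarrow> a *\<^sub>C x \<in> V"
  using is_hilbert unfolding is_hilbert_def by (elim conjE) metis

lemma ip_add_left: "x \<in> V \<Longrightarrow> y \<in> V \<Longrightarrow> z \<in> V \<Longrightarrow> ip (x + y) z = ip x z + ip y z"
  using is_hilbert unfolding is_hilbert_def by (elim conjE) metis

lemma ip_scaleC_left: "x \<in> V \<Longrightarrow> y \<in> V \<Longrightarrow> ip (a *\<^sub>C x) y = a * ip x y"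
  using is_hilbert unfolding is_hilbert_def by (elim conjE) metis

lemma ip_commute: "x \<in> V \<Longrightarrow> y \<in> V \<Longrightarrow> ip x y = cnj (ip y x)"
  using is_hilbert unfolding is_hilbert_def by (elim conjE) metis

lemma ip_self_nonneg: "x \<in> V \<Longrightarrow> 0 \<le> Re (ip x x)"
  using is_hilbert unfolding is_hilbert_def by (elim conjE) metis

lemma ip_self_eq_0: "x \<in> V \<Longrightarrow> ip x x = 0 \<Longrightarrow> x = 0"
  using is_hilbert unfolding is_hilbert_def by (elim conjE) metis

lemma Cauchy_converges:
  assumes "\<And>n. s n \<in> V" and "\<And>e. e > 0 \<Longrightarrow> \<exists>N. \<forall>m\<ge>N. \<forall>n\<ge>N. hnorm ip (s m - s n) < e"
  shows "\<exists>l\<in>V. (\<lambda>n. hnorm ip (s n - l)) \<longlonglongrightarrow> 0"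
proof -
  have "\<forall>s. (\<forall>n. s n \<in> V) \<and> (\<forall>e>0. \<exists>N. \<forall>m\<ge>N. \<forall>n\<ge>N. hnorm ip (s m - s n) < e)
          \<longrightarrow> (\<exists>l\<in>V. (\<lambda>n. hnorm ip (s n - l)) \<longlonglongrightarrow> 0)"
    using is_hilbert unfolding is_hilbert_def by (elim conjE)
  with assms show ?thesis by blast
qed

lemma uminus_mem [simp]: "x \<in> V \<Longrightarrow> - x \<in> V"
  using scaleC_mem[of x "-1"] by (simp only: scaleC_minus1_left)

lemma diff_mem [simp]: "x \<in> V \<Longrightarrow> y \<in> V \<Longrightarrow> x - y \<in> V"
  by (simp only: diff_conv_add_uminus) (intro add_mem uminus_mem)

lemma sum_mem [simp]: "(\<And>i. i \<in> A \<Longrightarrow> f i \<in> V) \<Longrightarrow> (\<Sum>i\<in>A. f i) \<in> V"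
  by (induction A rule: infinite_finite_induct) auto

lemma ip_add_right: "x \<in> V \<Longrightarrow> y \<in> V \<Longrightarrow> z \<in> V \<Longrightarrow> ip z (x + y) = ip z x + ip z y"
  by (simp add: ip_commute[of z] ip_add_left)

lemma ip_scaleC_right: "x \<in> V \<Longrightarrow> y \<in> V \<Longrightarrow> ip y (a *\<^sub>C x) = cnj a * ip y x"
  by (simp add: ip_commute[of y] ip_scaleC_left)

lemma ip_zero_left [simp]: "y \<in> V \<Longrightarrow> ip 0 y = 0"
  using ip_scaleC_left[of 0 y 0] by simp

lemma ip_minus_left: "x \<in> V \<Longrightarrow> y \<in> V \<Longrightarrow> ip (- x) y = - ip x y"
  using ip_scaleC_left[of x y "-1"] by (simp add: scaleC_minus1_left)

lemma ip_minus_right: "x \<in> V \<Longrightarrow> y \<in> V \<Longrightarrow> ip y (- x) = - ip y x"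
  using ip_scaleC_right[of x y "-1"] by (simp add: scaleC_minus1_left)

lemma ip_diff_left: "x \<in> V \<Longrightarrow> y \<in> V \<Longrightarrow> z \<in> V \<Longrightarrow> ip (x - y) z = ip x z - ip y z"
  using ip_add_left[of x "-y" z] ip_minus_left[of y z]
  by (simp del: add_uminus_conv_diff add: diff_conv_add_uminus)

lemma ip_diff_right: "x \<in> V \<Longrightarrow> y \<in> V \<Longrightarrow> z \<in> V \<Longrightarrow> ip z (x - y) = ip z x - ip z y"
  using ip_add_right[of x "-y" z] ip_minus_right[of y z]
  by (simp del: add_uminus_conv_diff add: diff_conv_add_uminus)

lemma ip_sum_left:
  "(\<And>i. i \<in> A \<Longrightarrow> f i \<in> V) \<Longrightarrow> y \<in> V \<Longrightarrow> ip (\<Sum>i\<in>A. f i) y = (\<Sum>i\<in>A. ip (f i) y)"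
  by (induction A rule: infinite_finite_induct) (auto simp: ip_add_left)

lemma ip_self_real: "x \<in> V \<Longrightarrow> ip x x = complex_of_real (Re (ip x x))"
  by (metis Reals_cnj_iff ip_commute of_real_Re)

lemma ip_zero_right [simp]: "y \<in> V \<Longrightarrow> ip y 0 = 0"
  using ip_scaleC_right[of 0 y 0] by simp

lemma hnorm_zero [simp]: "hnorm ip 0 = 0"
  by (simp add: hnorm_def)

lemma hnorm_nonneg [simp]: "x \<in> V \<Longrightarrow> 0 \<le> hnorm ip x"
  using ip_self_nonneg by (simp add: hnorm_def)

lemma hnorm_power2: "x \<in> V \<Longrightarrow> (hnorm ip x)\<^sup>2 = Re (ip x x)"
  using ip_self_nonneg[of x] by (simp add: hnorm_def)

lemma hnorm_eq_0: "x \<in> V \<Longrightarrow> hnorm ip x = 0 \<Longrightarrow> x = 0"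
  by (metis hnorm_power2 ip_self_eq_0 ip_self_real of_real_0 zero_power2)

lemma hnorm_scaleC: "x \<in> V \<Longrightarrow> hnorm ip (a *\<^sub>C x) = cmod a * hnorm ip x"
proof -
  assume x: "x \<in> V"
  have "ip (a *\<^sub>C x) (a *\<^sub>C x) = (a * cnj a) * ip x x"
    using x by (simp add: ip_scaleC_left ip_scaleC_right)
  also have "a * cnj a = complex_of_real ((cmod a)\<^sup>2)"
    by (rule complex_norm_square[symmetric])
  finally have "Re (ip (a *\<^sub>C x) (a *\<^sub>C x)) = (cmod a)\<^sup>2 * Re (ip x x)"
    by simp
  then show ?thesis
    by (simp add: hnorm_def real_sqrt_mult)
qed

lemma hnorm_minus_commute: "x \<in> V \<Longrightarrow> y \<in> V \<Longrightarrow> hnorm ip (x - y) = hnorm ip (y - x)"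
  using hnorm_scaleC[of "x - y" "-1"] by (simp add: scaleC_minus1_left)

lemma cmod_ip_le:
  assumes x: "x \<in> V" and y: "y \<in> V"
  shows "cmod (ip x y) \<le> hnorm ip x * hnorm ip y"
proof (cases "y = 0")
  case True
  then show ?thesis using x by simp
next
  case False
  define r where "r = Re (ip y y)"
  have r: "r > 0"
    using False y ip_self_nonneg ip_self_eq_0 ip_self_real unfolding r_def
    by (metis less_eq_real_def of_real_0)
  have yy: "ip y y = complex_of_real r"
    using ip_self_real[OF y] r_def by simp
  define t where "t = ip x y / complex_of_real r"
  have sq: "ip x y * cnj (ip x y) = complex_of_real ((cmod (ip x y))\<^sup>2)"
    by (rule complex_norm_square[symmetric])
  \<comment> \<open>expand \<open>0 \<le> \<langle>x - t y, x - t y\<rangle>\<close> with the minimising \<open>t = \<langle>x, y\<rangle> / \<langle>y, y\<rangle>\<close>\<close>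
  have "0 \<le> Re (ip (x - t *\<^sub>C y) (x - t *\<^sub>C y))"
    using x y by (simp add: ip_self_nonneg)
  also have "ip (x - t *\<^sub>C y) (x - t *\<^sub>C y)
      = ip x x - cnj t * ip x y - t * cnj (ip x y) + t * cnj t * ip y y"
    using x y
    by (simp add: ip_diff_left ip_diff_right ip_scaleC_left ip_scaleC_right algebra_simps
        ip_commute[of y x])
  also have "\<dots> = ip x x - complex_of_real ((cmod (ip x y))\<^sup>2 / r)"
    using r unfolding t_def yy by (simp add: sq field_simps mult.commute[of "cnj _"])
  finally have "(cmod (ip x y))\<^sup>2 \<le> Re (ip x x) * r"
    using r by (simp add: field_simps)
  also have "\<dots> = (hnorm ip x * hnorm ip y)\<^sup>2"
    using x y by (simp add: power_mult_distrib hnorm_power2 r_def)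
  finally show ?thesis
    by (rule power2_le_imp_le) (simp add: x y)
qed

lemma hnorm_triangle:
  assumes x: "x \<in> V" and y: "y \<in> V"
  shows "hnorm ip (x + y) \<le> hnorm ip x + hnorm ip y"
proof -
  have "ip (x + y) (x + y) = ip x x + ip y y + (ip x y + cnj (ip x y))"
    using x y by (simp add: ip_add_left ip_add_right ip_commute[of y x])
  then have "(hnorm ip (x + y))\<^sup>2 = (hnorm ip x)\<^sup>2 + (hnorm ip y)\<^sup>2 + 2 * Re (ip x y)"
    using x y by (simp add: hnorm_power2)
  also have "Re (ip x y) \<le> hnorm ip x * hnorm ip y"
    using cmod_ip_le[OF x y] complex_Re_le_cmod order_trans by blast
  finally have "(hnorm ip (x + y))\<^sup>2 \<le> (hnorm ip x + hnorm ip y)\<^sup>2"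
    by (simp add: power2_sum)
  then show ?thesis
    by (rule power2_le_imp_le) (simp add: x y)
qed

lemma hnorm_sum_le:
  "(\<And>i. i \<in> A \<Longrightarrow> f i \<in> V) \<Longrightarrow> hnorm ip (\<Sum>i\<in>A. f i) \<le> (\<Sum>i\<in>A. hnorm ip (f i))"
proof (induction A rule: infinite_finite_induct)
  case (insert a A)
  then have "hnorm ip (f a + sum f A) \<le> hnorm ip (f a) + hnorm ip (sum f A)"
    by (intro hnorm_triangle) auto
  with insert show ?case by auto
qed auto

lemma orth_proj_self: "x \<in> V \<Longrightarrow> orth_proj ip V x = x"
  unfolding orth_proj_def
proof (rule the_equality)
  fix q
  assume x: "x \<in> V" and q: "q \<in> V \<and> (\<forall>s\<in>V. ip (x - q) s = 0)"
  then have "x - q = 0"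
    using ip_self_eq_0[of "x - q"] by simp
  then show "q = x"
    by simp
qed simp

end

lemma hilbert_on_cinner: "hilbert_on (UNIV::'y::chilbert set) cinner"
  unfolding hilbert_on_def is_hilbert_def
  using cinner_add_left cinner_scaleC_left cinner_commute cinner_nonneg cinner_eq_zero
    cinner_complete
  by (auto simp: hnorm_def) blast

lemma ynorm_nonneg [simp]: "0 \<le> ynorm (y::'y::chilbert)"
  unfolding ynorm_def using hilbert_on.hnorm_nonneg[OF hilbert_on_cinner] by simp

lemma ynorm_scaleC: "ynorm (a *\<^sub>C (y::'y::chilbert)) = cmod a * ynorm y"
  unfolding ynorm_def using hilbert_on.hnorm_scaleC[OF hilbert_on_cinner] by simp

lemma ynorm_triangle: "ynorm ((x::'y::chilbert) + y) \<le> ynorm x + ynorm y"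
  unfolding ynorm_def using hilbert_on.hnorm_triangle[OF hilbert_on_cinner] by simp

lemma ynorm_sum_le: "ynorm (\<Sum>i\<in>A. (f i::'y::chilbert)) \<le> (\<Sum>i\<in>A. ynorm (f i))"
  unfolding ynorm_def using hilbert_on.hnorm_sum_le[OF hilbert_on_cinner] by simp

lemma ynorm_minus_commute: "ynorm ((x::'y::chilbert) - y) = ynorm (y - x)"
  unfolding ynorm_def using hilbert_on.hnorm_minus_commute[OF hilbert_on_cinner] by simp

section \<open>Invertibility of small perturbations of the identity\<close>

lemma geometric_sum_le:
  fixes q :: real
  assumes "0 \<le> q" "q < 1"
  shows "(\<Sum>i=n..<m. q^i) \<le> q^n / (1 - q)"
proof (cases "n < m")
  case True
  then have "{n..<m} = {n..m - 1}" by auto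
  then have "(1 - q) * (\<Sum>i=n..<m. q^i) = q^n - q^m"
    using sum_gp_multiplied[of n "m - 1" q] True by simp
  then have "(1 - q) * (\<Sum>i=n..<m. q^i) \<le> q^n"
    using zero_le_power[OF assms(1), of m] by linarith
  then show ?thesis
    using assms by (simp add: field_simps)
qed (use assms in simp)

context hilbert_on
begin

lemma geometric_steps_converge:
  assumes mem: "\<And>n. z n \<in> V" and step: "\<And>n. hnorm ip (z (Suc n) - z n) \<le> q^n * c"
    and q: "0 \<le> q" "q < 1"
  shows "\<exists>l\<in>V. (\<lambda>n. hnorm ip (z n - l)) \<longlonglongrightarrow> 0"
proof (rule Cauchy_converges[OF mem])
  have c: "0 \<le> c"
    using order_trans[OF hnorm_nonneg[OF diff_mem[OF mem mem]] step[of 0]] by simp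
  have tail: "hnorm ip (z m - z n) \<le> q^n * c / (1 - q)" if "n \<le> m" for m n
  proof -
    have "z m - z n = (\<Sum>i=n..<m. z (Suc i) - z i)"
      using that by (simp add: sum_Suc_diff')
    then have "hnorm ip (z m - z n) \<le> (\<Sum>i=n..<m. hnorm ip (z (Suc i) - z i))"
      using hnorm_sum_le[of "{n..<m}" "\<lambda>i. z (Suc i) - z i"] mem by simp
    also have "\<dots> \<le> (\<Sum>i=n..<m. q^i) * c"
      unfolding sum_distrib_right by (intro sum_mono step)
    also have "\<dots> \<le> q^n / (1 - q) * c"
      by (intro mult_right_mono geometric_sum_le q c)
    finally show ?thesis by simp
  qed
  fix e :: real
  assume "e > 0"
  moreover have "(\<lambda>n. q^n * c / (1 - q)) \<longlonglongrightarrow> 0"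
    using q by (intro tendsto_divide_zero tendsto_mult_left_zero LIMSEQ_power_zero) auto
  ultimately obtain N where N: "\<And>n. n \<ge> N \<Longrightarrow> q^n * c / (1 - q) < e"
    by (metis (no_types, lifting) order_tendstoD(2) eventually_sequentially)
  have "hnorm ip (z m - z n) < e" if "m \<ge> N" "n \<ge> N" for m n
  proof (cases "n \<le> m")
    case True
    then show ?thesis
      using tail[OF True] N[OF that(2)] by linarith
  next
    case False
    then show ?thesis
      using tail[of m n] N[OF that(1)] hnorm_minus_commute[OF mem mem, of m n] by simp
  qed
  then show "\<exists>N. \<forall>m\<ge>N. \<forall>n\<ge>N. hnorm ip (z m - z n) < e"
    by blast
qed

lemma hnorm_le_id_minus:
  assumes x: "x \<in> V" "S x \<in> V" and S: "hnorm ip (S x) \<le> q * hnorm ip x" and q: "q < 1"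
  shows "hnorm ip x \<le> hnorm ip (x - S x) / (1 - q)"
proof -
  have "hnorm ip x \<le> hnorm ip (x - S x) + hnorm ip (S x)"
    using hnorm_triangle[of "x - S x" "S x"] x by simp
  then have "(1 - q) * hnorm ip x \<le> hnorm ip (x - S x)"
    using S by (simp add: algebra_simps)
  then show ?thesis
    using q by (simp add: field_simps)
qed

lemma additive_diff:
  fixes S :: "'a \<Rightarrow> 'a"
  assumes "\<And>x y. x \<in> V \<Longrightarrow> y \<in> V \<Longrightarrow> S (x + y) = S x + S y" and "x \<in> V" "y \<in> V"
  shows "S (x - y) = S x - S y"
  using assms(1)[of "x - y" y] assms(2,3) by simp

lemma solution_id_minus_unique:
  assumes S_mem: "\<And>x. x \<in> V \<Longrightarrow> S x \<in> V"
    and S_add: "\<And>x y. x \<in> V \<Longrightarrow> y \<in> V \<Longrightarrow> S (x + y) = S x + S y"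
    and S_le: "\<And>x. x \<in> V \<Longrightarrow> hnorm ip (S x) \<le> q * hnorm ip x"
    and q: "q < 1" and xy: "x \<in> V" "y \<in> V" and eq: "x - S x = y - S y"
  shows "x = y"
proof -
  have mem: "x - y \<in> V"
    using xy by simp
  have "S (x - y) = S x - S y"
    using S_add xy by (rule additive_diff)
  then have "(x - y) - S (x - y) = (x - S x) - (y - S y)"
    by (simp add: algebra_simps)
  then have "(x - y) - S (x - y) = 0"
    by (simp add: eq)
  then have "hnorm ip (x - y) \<le> 0"
    using hnorm_le_id_minus[of _ S, OF mem S_mem[OF mem] S_le[OF mem] q] by simp
  then show "x = y"
    using hnorm_eq_0[OF mem] hnorm_nonneg[OF mem] by simp
qed

lemma iteration_limit_solves:
  assumes S_mem: "\<And>x. x \<in> V \<Longrightarrow> S x \<in> V"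
    and S_add: "\<And>x y. x \<in> V \<Longrightarrow> y \<in> V \<Longrightarrow> S (x + y) = S x + S y"
    and S_le: "\<And>x. x \<in> V \<Longrightarrow> hnorm ip (S x) \<le> q * hnorm ip x"
    and h: "h \<in> V" and z_mem: "\<And>n. z n \<in> V" and z_Suc: "\<And>n. z (Suc n) = h + S (z n)"
    and l: "l \<in> V" "(\<lambda>n. hnorm ip (z n - l)) \<longlonglongrightarrow> 0"
  shows "l - S l = h"
proof -
  have "hnorm ip (l - S l - h) \<le> hnorm ip (z (Suc n) - l) + q * hnorm ip (z n - l)" for n
  proof -
    have "S (z n - l) = S (z n) - S l"
      using S_add z_mem l(1) by (rule additive_diff)
    then have "l - S l - h = - (z (Suc n) - l) + S (z n - l)"
      by (simp add: z_Suc algebra_simps)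
    also have "hnorm ip \<dots> \<le> hnorm ip (- (z (Suc n) - l)) + hnorm ip (S (z n - l))"
      using z_mem l S_mem by (intro hnorm_triangle) simp_all
    also have "hnorm ip (- (z (Suc n) - l)) = hnorm ip (z (Suc n) - l)"
      using hnorm_minus_commute[OF z_mem l(1)] by simp
    finally show ?thesis
      using S_le[of "z n - l"] z_mem l by simp
  qed
  moreover have "(\<lambda>n. hnorm ip (z (Suc n) - l) + q * hnorm ip (z n - l)) \<longlonglongrightarrow> 0"
    using l(2) LIMSEQ_Suc[OF l(2)] by (intro tendsto_add_zero tendsto_mult_right_zero)
  ultimately have "hnorm ip (l - S l - h) \<le> 0"
    by (intro LIMSEQ_le_const) auto
  moreover have "l - S l - h \<in> V"
    using l h S_mem by simp
  ultimately show "l - S l = h"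
    using hnorm_eq_0 hnorm_nonneg by (metis antisym eq_iff_diff_eq_0)
qed

lemma ex_solution_id_minus:
  assumes S_mem: "\<And>x. x \<in> V \<Longrightarrow> S x \<in> V"
    and S_add: "\<And>x y. x \<in> V \<Longrightarrow> y \<in> V \<Longrightarrow> S (x + y) = S x + S y"
    and S_le: "\<And>x. x \<in> V \<Longrightarrow> hnorm ip (S x) \<le> q * hnorm ip x"
    and q: "0 \<le> q" "q < 1" and h: "h \<in> V"
  shows "\<exists>z\<in>V. z - S z = h"
proof -
  define z where "z n = ((\<lambda>y. h + S y) ^^ n) 0" for n
  have z_Suc: "z (Suc n) = h + S (z n)" for n
    by (simp add: z_def)
  have z_mem: "z n \<in> V" for n
    by (induction n) (simp_all add: z_def h S_mem)
  have "hnorm ip (z (Suc n) - z n) \<le> q^n * hnorm ip h" for n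
  proof (induction n)
    case 0
    show ?case using S_add[of 0 0] by (simp add: z_def)
  next
    case (Suc n)
    have "S (z (Suc n) - z n) = S (z (Suc n)) - S (z n)"
      using S_add z_mem z_mem by (rule additive_diff)
    then have "z (Suc (Suc n)) - z (Suc n) = S (z (Suc n) - z n)"
      by (simp only: z_Suc[of "Suc n"] z_Suc[of n]) simp
    then have "hnorm ip (z (Suc (Suc n)) - z (Suc n)) \<le> q * hnorm ip (z (Suc n) - z n)"
      using S_le z_mem by simp
    also have "\<dots> \<le> q * (q^n * hnorm ip h)"
      using Suc q by (simp add: mult_left_mono)
    finally show ?case by simp
  qed
  then obtain l where l: "l \<in> V" "(\<lambda>n. hnorm ip (z n - l)) \<longlonglongrightarrow> 0"
    using geometric_steps_converge[of z, OF z_mem _ q] by blast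
  then show ?thesis
    using iteration_limit_solves[where S = S and q = q and z = z, OF S_mem S_add S_le h z_mem z_Suc]
    by blast
qed

lemma ex1_solution_id_minus:
  assumes S_mem: "\<And>x. x \<in> V \<Longrightarrow> S x \<in> V"
    and S_add: "\<And>x y. x \<in> V \<Longrightarrow> y \<in> V \<Longrightarrow> S (x + y) = S x + S y"
    and S_le: "\<And>x. x \<in> V \<Longrightarrow> hnorm ip (S x) \<le> q * hnorm ip x"
    and q: "0 \<le> q" "q < 1" and h: "h \<in> V"
  shows "\<exists>!z. z \<in> V \<and> z - S z = h"
  using ex_solution_id_minus[OF assms] solution_id_minus_unique[OF S_mem S_add S_le q(2)]
  by metis

end

section \<open>Multi-indices and the multinomial theorem\<close>

definition indices_of_degree :: "nat \<Rightarrow> ('d::finite \<Rightarrow> nat) set" where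
  "indices_of_degree k = {n. sum n UNIV = k}"

definition indices_below_degree :: "nat \<Rightarrow> ('d::finite \<Rightarrow> nat) set" where
  "indices_below_degree N = {n. sum n UNIV < N}"

lemma indices_of_degree_le: "n \<in> indices_of_degree k \<Longrightarrow> n j \<le> k"
  using member_le_sum[of j UNIV n] by (simp add: indices_of_degree_def)

lemma finite_indices_of_degree [simp]: "finite (indices_of_degree k :: ('d::finite \<Rightarrow> nat) set)"
proof (rule finite_subset)
  show "indices_of_degree k \<subseteq> PiE (UNIV::'d set) (\<lambda>_. {..k})"
    by (auto simp: PiE_UNIV_domain indices_of_degree_le)
qed (simp add: finite_PiE)

lemma indices_of_degree_0: "indices_of_degree 0 = {\<lambda>_. 0}"
  unfolding indices_of_degree_def by (auto simp: fun_eq_iff)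

lemma indices_below_degree_eq_Union: "indices_below_degree N = (\<Union>k<N. indices_of_degree k)"
  unfolding indices_below_degree_def indices_of_degree_def by auto

lemma finite_indices_below_degree [simp]: "finite (indices_below_degree N)"
  unfolding indices_below_degree_eq_Union by auto

lemma sum_indices_below_degree:
  "(\<Sum>n\<in>indices_below_degree N. h n) = (\<Sum>k<N. \<Sum>n\<in>indices_of_degree k. h n)"
proof -
  have "(\<Sum>n\<in>indices_below_degree N. h n)
      = (\<Sum>k<N. sum h {n \<in> indices_below_degree N. sum n UNIV = k})"
    by (rule sum.group[symmetric, OF finite_indices_below_degree])
      (auto simp: indices_below_degree_def)
  also have "\<dots> = (\<Sum>k<N. \<Sum>n\<in>indices_of_degree k. h n)"
    by (intro sum.cong refl arg_cong2[where f = sum])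
      (auto simp: indices_below_degree_def indices_of_degree_def)
  finally show ?thesis .
qed

lemma finite_subset_indices_below_degree: "finite G \<Longrightarrow> \<exists>N. G \<subseteq> indices_below_degree N"
  by (rule exI[of _ "Suc (Max ((\<lambda>n. sum n UNIV) ` G))"])
    (auto simp: indices_below_degree_def le_imp_less_Suc)

lemma sum_outside_indices_below_degree_le:
  fixes b :: "('d::finite \<Rightarrow> nat) \<Rightarrow> real"
  assumes H: "finite H" "H \<inter> indices_below_degree N = {}" and b: "\<And>n. 0 \<le> b n"
  shows "\<exists>K. (\<Sum>n\<in>H. b n) \<le> (\<Sum>k=N..<K. \<Sum>n\<in>indices_of_degree k. b n)"
proof -
  obtain K where K: "H \<subseteq> indices_below_degree K"
    using finite_subset_indices_below_degree[OF H(1)] by blast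
  have deg: "sum n UNIV \<in> {N..<K}" if "n \<in> H" for n
    using H(2) K that unfolding indices_below_degree_def by auto
  have "(\<Sum>n\<in>H. b n) = (\<Sum>k=N..<K. sum b {n \<in> H. sum n UNIV = k})"
    by (rule sum.group[symmetric]) (use H deg in auto)
  also have "\<dots> \<le> (\<Sum>k=N..<K. \<Sum>n\<in>indices_of_degree k. b n)"
    by (intro sum_mono sum_mono2 finite_indices_of_degree) (auto simp: indices_of_degree_def b)
  finally show ?thesis by blast
qed

lemma sum_fun_upd_UNIV:
  "sum (n(j := x)) (UNIV::'d::finite set) + n j = sum n UNIV + (x::nat)"
proof -
  have "sum (n(j := x)) UNIV = x + sum n (UNIV - {j})"
    by (subst sum.remove[of UNIV j]) (auto intro: sum.cong)
  moreover have "sum n UNIV = n j + sum n (UNIV - {j})"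
    by (subst sum.remove[of UNIV j]) auto
  ultimately show ?thesis by simp
qed

lemma prod_fun_upd_UNIV:
  fixes g :: "'d::finite \<Rightarrow> nat \<Rightarrow> 'a::comm_monoid_mult"
  shows "(\<Prod>i\<in>UNIV. g i ((n(j := x)) i)) = g j x * (\<Prod>i\<in>UNIV - {j}. g i (n i))"
  by (subst prod.remove[of UNIV j]) (auto intro: prod.cong)

lemma fun_upd_Suc_mem_indices_of_degree:
  "n \<in> indices_of_degree k \<Longrightarrow> n(j := Suc (n j)) \<in> indices_of_degree (Suc k)"
  using sum_fun_upd_UNIV[of n j "Suc (n j)"] by (simp add: indices_of_degree_def)

lemma fun_upd_pred_mem_indices_of_degree:
  "0 < m j \<Longrightarrow> m \<in> indices_of_degree (Suc k) \<Longrightarrow> m(j := m j - 1) \<in> indices_of_degree k"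
  using sum_fun_upd_UNIV[of m j "m j - 1"] by (simp add: indices_of_degree_def)

text \<open>Every index of degree \<open>k + 1\<close> arises from one of degree \<open>k\<close> by raising one entry \<open>j\<close>.\<close>

lemma sum_indices_of_degree_Suc:
  fixes g :: "('d::finite \<Rightarrow> nat) \<Rightarrow> 'd \<Rightarrow> 'a::comm_monoid_add"
  shows "(\<Sum>m\<in>indices_of_degree (Suc k). \<Sum>j | 0 < m j. g (m(j := m j - 1)) j)
       = (\<Sum>n\<in>indices_of_degree k. \<Sum>j\<in>UNIV. g n j)"
proof -
  have "(\<Sum>m\<in>indices_of_degree (Suc k). \<Sum>j | 0 < m j. g (m(j := m j - 1)) j)
      = (\<Sum>(m, j)\<in>Sigma (indices_of_degree (Suc k)) (\<lambda>m. {j. 0 < m j}). g (m(j := m j - 1)) j)"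
    by (rule sum.Sigma) auto
  also have "\<dots> = (\<Sum>(n, j)\<in>indices_of_degree k \<times> UNIV. g n j)"
    by (rule sum.reindex_bij_witness[where i = "\<lambda>(n, j). (n(j := Suc (n j)), j)"
          and j = "\<lambda>(m, j). (m(j := m j - 1), j)"])
      (auto simp: fun_upd_Suc_mem_indices_of_degree fun_upd_pred_mem_indices_of_degree
        simp del: One_nat_def)
  also have "\<dots> = (\<Sum>n\<in>indices_of_degree k. \<Sum>j\<in>UNIV. g n j)"
    by (rule sum.Sigma[symmetric]) auto
  finally show ?thesis .
qed

lemma mono_pow_fun_upd_Suc: "mono_pow lam (n(j := Suc (n j))) = lam $ j * mono_pow lam n"
proof -
  have "mono_pow lam n = lam $ j ^ n j * (\<Prod>i\<in>UNIV - {j}. lam $ i ^ n i)"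
    unfolding mono_pow_def by (subst prod.remove[of UNIV j]) auto
  then show ?thesis
    unfolding mono_pow_def prod_fun_upd_UNIV[where g = "\<lambda>i k. lam $ i ^ k"] by simp
qed

lemma mfact_ratio_pos [simp]: "0 < mfact_ratio n"
  unfolding mfact_ratio_def by (simp add: prod_pos)

lemma mfact_ratio_nonzero [simp]: "mfact_ratio n \<noteq> 0"
  using mfact_ratio_pos[of n] by linarith

lemma mfact_ratio_fun_upd_pred:
  assumes "0 < m j"
  shows "mfact_ratio m * real (sum m UNIV) = mfact_ratio (m(j := m j - 1)) * real (m j)"
proof -
  define m' where "m' = m(j := m j - 1)"
  have mj: "m j = Suc (m' j)"
    using assms by (simp add: m'_def)
  have deg: "sum m UNIV = Suc (sum m' UNIV)"
    using sum_fun_upd_UNIV[of m j "m j - 1"] assms by (simp add: m'_def)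
  have "(\<Prod>i\<in>UNIV. fact (m i) :: real) = fact (m j) * (\<Prod>i\<in>UNIV - {j}. fact (m i))"
    by (subst prod.remove[of UNIV j]) auto
  moreover have "(\<Prod>i\<in>UNIV. fact (m' i) :: real) = fact (m' j) * (\<Prod>i\<in>UNIV - {j}. fact (m i))"
    unfolding m'_def by (subst prod_fun_upd_UNIV[where g = "\<lambda>_ k. fact k"]) simp
  ultimately have P: "(\<Prod>i\<in>UNIV. fact (m i) :: real) = real (m j) * (\<Prod>i\<in>UNIV. fact (m' i))"
    by (simp add: mj)
  have F: "(fact (sum m UNIV) :: real) = real (sum m UNIV) * fact (sum m' UNIV)"
    by (simp add: deg)
  have "real (sum m UNIV) \<noteq> 0"
    by (simp add: deg del: of_nat_sum)
  then show ?thesis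
    unfolding mfact_ratio_def m'_def[symmetric] P F by (simp add: field_simps)
qed

lemma weighted_sum_power2_le:
  fixes a p :: "'i \<Rightarrow> real"
  assumes "\<And>j. j \<in> J \<Longrightarrow> 0 < p j"
  shows "(\<Sum>j\<in>J. a j)\<^sup>2 \<le> (\<Sum>j\<in>J. p j) * (\<Sum>j\<in>J. (a j)\<^sup>2 / p j)"
proof -
  have "(\<Sum>j\<in>J. a j) = (\<Sum>j\<in>J. sqrt (p j) * (a j / sqrt (p j)))"
  proof (intro sum.cong refl)
    fix j
    assume "j \<in> J"
    then show "a j = sqrt (p j) * (a j / sqrt (p j))"
      using assms[of j] by simp
  qed
  then have "(\<Sum>j\<in>J. a j)\<^sup>2 \<le> (\<Sum>j\<in>J. (sqrt (p j))\<^sup>2) * (\<Sum>j\<in>J. (a j / sqrt (p j))\<^sup>2)"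
    by (metis Cauchy_Schwarz_ineq_sum)
  also have "\<dots> = (\<Sum>j\<in>J. p j) * (\<Sum>j\<in>J. (a j)\<^sup>2 / p j)"
    using assms by (intro arg_cong2[where f = "(*)"] sum.cong) (auto simp: power_divide less_imp_le)
  finally show ?thesis .
qed

lemma sum_positive_entries: "(\<Sum>j | 0 < m j. m j) = sum (m::'d::finite \<Rightarrow> nat) UNIV"
  by (rule sum.mono_neutral_left) auto

lemma monomial_term_fun_upd_pred:
  fixes x :: "'d::finite \<Rightarrow> real"
  assumes j: "0 < m j"
  shows "x j * ((\<Prod>i\<in>UNIV. x i ^ (m(j := m j - 1)) i) / mfact_ratio (m(j := m j - 1)))
       = (\<Prod>i\<in>UNIV. x i ^ m i) / mfact_ratio m * (real (m j) / real (sum m UNIV))"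
proof -
  have "(\<Prod>i\<in>UNIV. x i ^ m i) = x j * (\<Prod>i\<in>UNIV. x i ^ (m(j := m j - 1)) i)"
    using prod_fun_upd_UNIV[where g = "\<lambda>i k. x i ^ k", of m j]
      prod.remove[of UNIV j "\<lambda>i. x i ^ m i"] j
    by (simp add: power_eq_if)
  moreover have "sum m UNIV \<noteq> 0"
    using j by auto
  ultimately show ?thesis
    using mfact_ratio_fun_upd_pred[of m j, OF j] j by (simp add: field_simps)
qed

lemma multinomial_sum:
  fixes x :: "'d::finite \<Rightarrow> real"
  shows "(\<Sum>n\<in>indices_of_degree k. (\<Prod>j\<in>UNIV. x j ^ n j) / mfact_ratio n) = (\<Sum>j\<in>UNIV. x j) ^ k"
proof (induction k)
  case 0
  then show ?case by (simp add: indices_of_degree_0 mfact_ratio_def)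
next
  case (Suc k)
  define u where "u n = (\<Prod>j\<in>UNIV. x j ^ n j) / mfact_ratio n" for n
  have u: "u m = (\<Sum>j | 0 < m j. x j * u (m(j := m j - 1)))"
    if m: "m \<in> indices_of_degree (Suc k)" for m
  proof -
    have "(\<Sum>j | 0 < m j. x j * u (m(j := m j - 1)))
        = (\<Sum>j | 0 < m j. u m * (real (m j) / real (Suc k)))"
    proof (intro sum.cong refl)
      fix j
      assume "j \<in> {j. 0 < m j}"
      then show "x j * u (m(j := m j - 1)) = u m * (real (m j) / real (Suc k))"
        using monomial_term_fun_upd_pred[of m j x] m unfolding u_def
        by (simp add: indices_of_degree_def del: of_nat_sum)
    qed
    also have "\<dots> = u m * (\<Sum>j | 0 < m j. real (m j)) / real (Suc k)"
      by (simp add: sum_distrib_left sum_divide_distrib)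
    also have "(\<Sum>j | 0 < m j. real (m j)) = real (Suc k)"
      using sum_positive_entries[of m] m by (simp add: indices_of_degree_def flip: of_nat_sum)
    also have "u m * real (Suc k) / real (Suc k) = u m"
      by simp
    finally show ?thesis
      by (rule sym)
  qed
  have "(\<Sum>m\<in>indices_of_degree (Suc k). u m)
      = (\<Sum>m\<in>indices_of_degree (Suc k). \<Sum>j | 0 < m j. x j * u (m(j := m j - 1)))"
    by (intro sum.cong refl u)
  also have "\<dots> = (\<Sum>n\<in>indices_of_degree k. \<Sum>j\<in>UNIV. x j * u n)"
    by (rule sum_indices_of_degree_Suc)
  also have "\<dots> = (\<Sum>j\<in>UNIV. x j) * (\<Sum>n\<in>indices_of_degree k. u n)"
    by (simp add: sum_distrib_left sum_distrib_right mult.commute)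
  finally show ?case
    using Suc unfolding u_def by simp
qed

text \<open>For \<open>|n| = k\<close>, \<^term>\<open>abel_word_sum A x k n\<close> is \<open>\<Sum>\<^sub>v A\<^sup>v x\<close> over the words \<open>v\<close> with
  abelianization \<open>n\<close>, split according to the last letter of \<open>v\<close>.\<close>

primrec abel_word_sum ::
    "('d \<Rightarrow> 'x \<Rightarrow> 'x) \<Rightarrow> 'x \<Rightarrow> nat \<Rightarrow> ('d::finite \<Rightarrow> nat) \<Rightarrow> 'x::comm_monoid_add" where
  "abel_word_sum A x 0 n = (if n = (\<lambda>_. 0) then x else 0)"
| "abel_word_sum A x (Suc k) n = (\<Sum>j | 0 < n j. A j (abel_word_sum A x k (n(j := n j - 1))))"

section \<open>Uniqueness of Arveson coefficients\<close>

lemma powser_zero_imp_coeff_zero: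
  fixes b :: "nat \<Rightarrow> complex"
  assumes "0 < \<delta>" and sums: "\<And>t. norm t < \<delta> \<Longrightarrow> (\<lambda>k. b k * t^k) sums 0"
  shows "b k = 0"
proof (induction k rule: less_induct)
  case (less k)
  have "(\<lambda>i. b (i + k) * t^i) sums 0" if t: "t \<noteq> 0" "norm t < \<delta>" for t
  proof -
    have "(\<lambda>i. b i * t^i) sums (0 + (\<Sum>i<k. b i * t^i))"
      using sums[OF t(2)] less by simp
    then have "(\<lambda>i. b (i + k) * t^(i + k)) sums 0"
      by (subst sums_iff_shift) simp
    then have "(\<lambda>i. b (i + k) * t^(i + k) / t^k) sums (0 / t^k)"
      by (rule sums_divide)
    then show ?thesis
      using t by (simp add: power_add)
  qed
  then have "((\<lambda>_. 0) \<longlongrightarrow> b k) (at (0::complex))"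
    using powser_limit_0_strong[OF assms(1), of "\<lambda>i. b (i + k)" "\<lambda>_. 0"] by simp
  then show ?case
    using tendsto_unique[OF at_neq_bot _ tendsto_const] by metis
qed

lemma base_digits_eq:
  fixes x y :: "nat \<Rightarrow> nat"
  assumes "\<And>i. x i < B" "\<And>i. y i < B" and "(\<Sum>i<d. x i * B^i) = (\<Sum>i<d. y i * B^i)"
    and "i < d"
  shows "x i = y i"
  using assms
proof (induction d arbitrary: x y i)
  case (Suc d)
  have split: "(\<Sum>i<Suc d. z i * B^i) = z 0 + B * (\<Sum>i<d. z (Suc i) * B^i)" for z :: "nat \<Rightarrow> nat"
    by (subst sum.lessThan_Suc_shift) (simp add: sum_distrib_left algebra_simps)
  have eq: "x 0 + B * (\<Sum>i<d. x (Suc i) * B^i) = y 0 + B * (\<Sum>i<d. y (Suc i) * B^i)"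
    using Suc.prems(3) unfolding split .
  have "x 0 = y 0"
    using arg_cong[OF eq, of "\<lambda>v. v mod B"] Suc.prems(1,2)[of 0] by simp
  moreover have "(\<Sum>i<d. x (Suc i) * B^i) = (\<Sum>i<d. y (Suc i) * B^i)"
    using arg_cong[OF eq, of "\<lambda>v. v div B"] Suc.prems(1,2)[of 0] by simp
  then have "x (Suc j) = y (Suc j)" if "j < d" for j
    using Suc.IH[of "\<lambda>i. x (Suc i)" "\<lambda>i. y (Suc i)" j] Suc.prems(1,2) that by blast
  ultimately show ?case
    using Suc.prems(4) by (cases i) simp_all
qed simp

text \<open>Kronecker substitution: with \<open>\<iota>\<close> enumerating the variables, the exponents
  \<open>\<Sum>\<^sub>j n\<^sub>j B\<^bsup>\<iota> j\<^esup>\<close> separate all indices with entries below \<open>B\<close>.\<close>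

lemma kronecker_exponent_inj:
  fixes \<iota> :: "'d::finite \<Rightarrow> nat" and n n' :: "'d \<Rightarrow> nat" and B :: nat
  assumes \<iota>: "bij_betw \<iota> UNIV {..<CARD('d)}" and small: "\<And>j. n j < B" "\<And>j. n' j < B"
    and eq: "(\<Sum>j\<in>UNIV. n j * B ^ \<iota> j) = (\<Sum>j\<in>UNIV. n' j * B ^ \<iota> j)"
  shows "n = n'"
proof
  fix j
  define \<kappa> where "\<kappa> = the_inv_into UNIV \<iota>"
  have \<kappa>: "\<kappa> (\<iota> j) = j" for j
    using \<iota> by (simp add: \<kappa>_def bij_betw_def the_inv_into_f_f)
  have digits: "(\<Sum>j\<in>UNIV. m j * B ^ \<iota> j) = (\<Sum>i<CARD('d). m (\<kappa> i) * B ^ i)" for m :: "'d \<Rightarrow> nat"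
    using sum.reindex_bij_betw[OF \<iota>, of "\<lambda>i. m (\<kappa> i) * B ^ i"] by (simp add: \<kappa>)
  have "\<iota> j < CARD('d)"
    using \<iota> by (auto simp: bij_betw_def)
  then have "n (\<kappa> (\<iota> j)) = n' (\<kappa> (\<iota> j))"
    using base_digits_eq[of "\<lambda>i. n (\<kappa> i)" B "\<lambda>i. n' (\<kappa> i)"] small eq by (simp add: digits)
  then show "n j = n' j"
    by (simp add: \<kappa>)
qed

lemma mono_pow_vec_powers: "mono_pow (\<chi> j. s ^ e j) n = s ^ (\<Sum>j\<in>UNIV. n j * e j)"
  unfolding mono_pow_def by (simp add: power_sum power_mult[symmetric] mult.commute)

lemma norm_vec_powers_less_1:
  fixes s :: complex
  assumes s: "cmod s < 1 / real CARD('d::finite)" and e: "\<And>j. 0 < e j"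
  shows "norm (\<chi> j::'d. s ^ e j) < 1"
proof -
  have "real CARD('d) * cmod s < 1"
    using s by (simp add: field_simps)
  moreover have "1 / real CARD('d) \<le> 1"
    by (simp add: Suc_leI)
  then have "cmod s \<le> 1"
    using s by linarith
  then have "cmod (s ^ e j) \<le> cmod s" for j
    unfolding norm_power using power_decreasing[of 1 "e j" "cmod s"] e[of j] by simp
  then have "norm (\<chi> j::'d. s ^ e j) \<le> real CARD('d) * cmod s"
    using L2_set_le_sum[of UNIV "\<lambda>j. cmod (s ^ e j)"] sum_mono[of UNIV "\<lambda>j. cmod (s ^ e j)" "\<lambda>_. cmod s"]
    unfolding norm_vec_def by simp
  ultimately show ?thesis
    by linarith
qed

lemma sums_grouped_by_exponent:
  fixes a :: "'i \<Rightarrow> 'a::real_normed_field" and \<phi> :: "'i \<Rightarrow> nat"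
  assumes "finite A"
  shows "(\<lambda>m. (\<Sum>n | n \<in> A \<and> \<phi> n = m. a n) * s^m) sums (\<Sum>n\<in>A. s ^ \<phi> n * a n)"
proof -
  have "(\<lambda>m. (\<Sum>n | n \<in> A \<and> \<phi> n = m. a n) * s^m)
      sums (\<Sum>m\<in>\<phi> ` A. (\<Sum>n | n \<in> A \<and> \<phi> n = m. a n) * s^m)"
  proof (rule sums_finite)
    fix m
    assume "m \<notin> \<phi> ` A"
    then have empty: "{n. n \<in> A \<and> \<phi> n = m} = {}"
      by auto
    show "(\<Sum>n | n \<in> A \<and> \<phi> n = m. a n) * s^m = 0"
      unfolding empty by simp
  qed (simp add: assms)
  also have "\<dots> = (\<Sum>m\<in>\<phi> ` A. \<Sum>n | n \<in> A \<and> \<phi> n = m. s ^ \<phi> n * a n)"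
    unfolding sum_distrib_right by (intro sum.cong refl) (simp add: mult.commute)
  also have "\<dots> = (\<Sum>n\<in>A. s ^ \<phi> n * a n)"
    by (rule sum.group) (auto simp: assms)
  finally show ?thesis .
qed

lemma homogeneous_coeff_eq_0:
  fixes a :: "('d::finite \<Rightarrow> nat) \<Rightarrow> complex"
  assumes zero: "\<And>\<zeta>::complex^'d. norm \<zeta> < 1 \<Longrightarrow> (\<Sum>n\<in>indices_of_degree k. mono_pow \<zeta> n * a n) = 0"
    and n0: "n0 \<in> indices_of_degree k"
  shows "a n0 = 0"
proof -
  obtain \<iota> :: "'d \<Rightarrow> nat" where \<iota>: "bij_betw \<iota> UNIV {..<CARD('d)}"
    using ex_bij_betw_finite_nat[of "UNIV::'d set"] by (auto simp: atLeast0LessThan)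
  define \<phi> where "\<phi> n = (\<Sum>j\<in>UNIV. n j * Suc k ^ \<iota> j)" for n :: "'d \<Rightarrow> nat"
  have \<phi>_inj: "n = n0" if "n \<in> indices_of_degree k" "\<phi> n = \<phi> n0" for n
    using kronecker_exponent_inj[OF \<iota>, of n "Suc k" n0] that n0
    by (simp add: \<phi>_def indices_of_degree_le le_imp_less_Suc)
  define b where "b m = (\<Sum>n | n \<in> indices_of_degree k \<and> \<phi> n = m. a n)" for m
  have "b m = 0" for m
  proof (rule powser_zero_imp_coeff_zero[of "1 / real CARD('d)"])
    fix s :: complex
    assume s: "norm s < 1 / real CARD('d)"
    have "(\<Sum>n\<in>indices_of_degree k. s ^ \<phi> n * a n) = 0"
      using zero[OF norm_vec_powers_less_1[OF s, of "\<lambda>j. Suc k ^ \<iota> j"]]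
      by (simp add: mono_pow_vec_powers \<phi>_def)
    then show "(\<lambda>m. b m * s^m) sums 0"
      using sums_grouped_by_exponent[OF finite_indices_of_degree[of k], where \<phi> = \<phi> and a = a and s = s] unfolding b_def by simp
  qed simp
  moreover have "{n. n \<in> indices_of_degree k \<and> \<phi> n = \<phi> n0} = {n0}"
    using \<phi>_inj n0 by auto
  ultimately show ?thesis
    using b_def[of "\<phi> n0"] by simp
qed

lemma has_sum_by_degree:
  fixes c :: "('d::finite \<Rightarrow> nat) \<Rightarrow> 'a::{topological_comm_monoid_add,t3_space}"
  assumes "(c has_sum s) UNIV"
  shows "(\<lambda>k. \<Sum>n\<in>indices_of_degree k. c n) sums s"
proof -
  have inj: "inj (\<lambda>n::'d \<Rightarrow> nat. (sum n UNIV, n))"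
    by (auto simp: inj_on_def)
  have "range (\<lambda>n::'d \<Rightarrow> nat. (sum n UNIV, n)) = Sigma UNIV indices_of_degree"
    by (auto simp: indices_of_degree_def image_iff)
  then have "((\<lambda>(k, n). c n) has_sum s) (Sigma UNIV indices_of_degree)"
    using has_sum_reindex[OF inj, of "\<lambda>(k, n). c n" s] assms by (simp add: o_def)
  then have "((\<lambda>k. \<Sum>n\<in>indices_of_degree k. c n) has_sum s) UNIV"
    by (rule has_sum_SigmaD) (simp add: has_sum_finite)
  then show ?thesis
    by (rule has_sum_imp_sums)
qed

lemma norm_vec_power2: "(norm (lam::complex^'d::finite))\<^sup>2 = (\<Sum>j\<in>UNIV. (cmod (lam $ j))\<^sup>2)"
  unfolding norm_vec_def L2_set_def by (simp add: sum_nonneg)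

lemma norm_vec_scale: "norm (\<chi> j. t * (z::complex^'d::finite) $ j) = cmod t * norm z"
  unfolding norm_vec_def by (simp add: norm_mult L2_set_right_distrib)

lemma multi_powser_coeff_eq_0:
  fixes a :: "('d::finite \<Rightarrow> nat) \<Rightarrow> complex"
  assumes zero: "\<And>lam::complex^'d. norm lam < 1 \<Longrightarrow> ((\<lambda>n. mono_pow lam n * a n) has_sum 0) UNIV"
  shows "a n = 0"
proof (rule homogeneous_coeff_eq_0[where k = "sum n UNIV"])
  fix \<zeta> :: "complex^'d"
  assume \<zeta>: "norm \<zeta> < 1"
  define P where "P k = (\<Sum>n\<in>indices_of_degree k. mono_pow \<zeta> n * a n)" for k
  \<comment> \<open>restricting to the complex line through \<open>\<zeta>\<close> separates the homogeneous parts\<close>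
  have "P k = 0" for k
  proof (rule powser_zero_imp_coeff_zero[of 1])
    fix t :: complex
    assume t: "norm t < 1"
    have "cmod t * norm \<zeta> \<le> norm \<zeta>"
      using t by (intro mult_left_le_one_le) auto
    then have "norm (\<chi> j. t * \<zeta> $ j) < 1"
      using \<zeta> by (simp add: norm_vec_scale)
    moreover have "mono_pow (\<chi> j. t * \<zeta> $ j) n = t ^ sum n UNIV * mono_pow \<zeta> n" for n
      unfolding mono_pow_def by (simp add: power_mult_distrib prod.distrib power_sum)
    ultimately have "((\<lambda>n. t ^ sum n UNIV * (mono_pow \<zeta> n * a n)) has_sum 0) UNIV"
      using zero[of "\<chi> j. t * \<zeta> $ j"] by (simp add: mult.assoc)
    then have "(\<lambda>k. \<Sum>n\<in>indices_of_degree k. t ^ sum n UNIV * (mono_pow \<zeta> n * a n)) sums 0"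
      by (rule has_sum_by_degree)
    moreover have "(\<Sum>n\<in>indices_of_degree k. t ^ sum n UNIV * (mono_pow \<zeta> n * a n)) = P k * t^k" for k
      unfolding P_def sum_distrib_right
      by (intro sum.cong refl) (simp add: indices_of_degree_def mult.commute)
    ultimately show "(\<lambda>k. P k * t^k) sums 0"
      by simp
  qed simp
  then show "(\<Sum>n\<in>indices_of_degree (sum n UNIV). mono_pow \<zeta> n * a n) = 0"
    by (simp add: P_def)
qed (simp add: indices_of_degree_def)

lemma yhas_sum_diff:
  assumes "yhas_sum g1 S l" "yhas_sum g2 S l"
  shows "yhas_sum (\<lambda>n. g1 n - g2 n) S 0"
  unfolding yhas_sum_def
proof (intro allI impI)
  fix e :: real
  assume e: "e > 0"
  obtain F1 where F1: "finite F1" "F1 \<subseteq> S"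
    "\<And>G. finite G \<Longrightarrow> F1 \<subseteq> G \<Longrightarrow> G \<subseteq> S \<Longrightarrow> ynorm (sum g1 G - l) < e/2"
    using assms(1) e unfolding yhas_sum_def by (meson half_gt_zero)
  obtain F2 where F2: "finite F2" "F2 \<subseteq> S"
    "\<And>G. finite G \<Longrightarrow> F2 \<subseteq> G \<Longrightarrow> G \<subseteq> S \<Longrightarrow> ynorm (sum g2 G - l) < e/2"
    using assms(2) e unfolding yhas_sum_def by (meson half_gt_zero)
  have "ynorm ((\<Sum>n\<in>G. g1 n - g2 n) - 0) < e" if G: "finite G" "F1 \<union> F2 \<subseteq> G" "G \<subseteq> S" for G
  proof -
    have "(\<Sum>n\<in>G. g1 n - g2 n) - 0 = (sum g1 G - l) + (l - sum g2 G)"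
      by (simp add: sum_subtractf)
    then have "ynorm ((\<Sum>n\<in>G. g1 n - g2 n) - 0) \<le> ynorm (sum g1 G - l) + ynorm (sum g2 G - l)"
      using ynorm_triangle ynorm_minus_commute by metis
    then show ?thesis
      using F1(3)[of G] F2(3)[of G] G by simp
  qed
  then show "\<exists>F. finite F \<and> F \<subseteq> S \<and>
      (\<forall>G. finite G \<and> F \<subseteq> G \<and> G \<subseteq> S \<longrightarrow> ynorm (sum (\<lambda>n. g1 n - g2 n) G - 0) < e)"
    using F1 F2 by (intro exI[of _ "F1 \<union> F2"]) auto
qed

lemma yhas_sum_cinner:
  assumes "yhas_sum g S l"
  shows "((\<lambda>n. cinner (g n) y) has_sum cinner l y) S"
  unfolding has_sum_def tendsto_iff eventually_finite_subsets_at_top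
proof (intro allI impI)
  fix e :: real
  assume e: "e > 0"
  define c where "c = ynorm y"
  have c: "0 \<le> c"
    by (simp add: c_def)
  obtain F where F: "finite F" "F \<subseteq> S"
    "\<And>G. finite G \<Longrightarrow> F \<subseteq> G \<Longrightarrow> G \<subseteq> S \<Longrightarrow> ynorm (sum g G - l) < e / (c + 1)"
    using assms e c unfolding yhas_sum_def by (metis add_nonneg_pos divide_pos_pos zero_less_one)
  have "dist (\<Sum>n\<in>G. cinner (g n) y) (cinner l y) < e" if G: "finite G" "F \<subseteq> G" "G \<subseteq> S" for G
  proof -
    have "(\<Sum>n\<in>G. cinner (g n) y) - cinner l y = cinner (sum g G - l) y"
      using hilbert_on.ip_sum_left[OF hilbert_on_cinner, of G g y]
        hilbert_on.ip_diff_left[OF hilbert_on_cinner, of "sum g G" l y] by simp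
    then have "dist (\<Sum>n\<in>G. cinner (g n) y) (cinner l y) \<le> ynorm (sum g G - l) * c"
      using hilbert_on.cmod_ip_le[OF hilbert_on_cinner, of "sum g G - l" y]
      by (simp add: dist_norm ynorm_def c_def)
    also have "\<dots> \<le> e / (c + 1) * c"
      using F(3)[OF G] c by (intro mult_right_mono) auto
    also have "\<dots> < e"
      using e c by (simp add: field_simps)
    finally show ?thesis .
  qed
  then show "\<exists>X. finite X \<and> X \<subseteq> S \<and>
      (\<forall>Y. finite Y \<and> X \<subseteq> Y \<and> Y \<subseteq> S \<longrightarrow> dist (\<Sum>n\<in>Y. cinner (g n) y) (cinner l y) < e)"
    using F by blast
qed

lemma arv_rep_unique:
  fixes f :: "complex^'d::finite \<Rightarrow> 'y::chilbert"
  assumes c1: "arv_rep f c1" and c2: "arv_rep f c2"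
  shows "c1 = c2"
proof
  fix n0
  define y where "y = c1 n0 - c2 n0"
  have "cinner (c1 n - c2 n) y = 0" for n
  proof (rule multi_powser_coeff_eq_0)
    fix lam :: "complex^'d"
    assume lam: "norm lam < 1"
    have "yhas_sum (\<lambda>n. mono_pow lam n *\<^sub>C c1 n - mono_pow lam n *\<^sub>C c2 n) UNIV 0"
      using c1 c2 lam unfolding arv_rep_def by (intro yhas_sum_diff) auto
    from yhas_sum_cinner[OF this, of y]
    show "((\<lambda>n. mono_pow lam n * cinner (c1 n - c2 n) y) has_sum 0) UNIV"
      by (simp add: scaleC_diff_right[symmetric] cinner_scaleC_left
          hilbert_on.ip_zero_left[OF hilbert_on_cinner])
  qed
  then have "cinner y y = 0"
    by (simp add: y_def)
  then have "y = 0"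
    by (rule cinner_eq_zero)
  then show "c1 n0 = c2 n0"
    by (simp add: y_def)
qed

section \<open>Contractive solutions of the Gleason problem\<close>

locale contractive_gleason = hilbert_on M ipM
  for M :: "(complex^'d::finite \<Rightarrow> 'y::chilbert) set" and ipM +
  fixes T :: "'d \<Rightarrow> (complex^'d \<Rightarrow> 'y) \<Rightarrow> (complex^'d \<Rightarrow> 'y)"
  assumes vanish_off_ball: "\<forall>f\<in>M. \<forall>lam. \<not> norm lam < 1 \<longrightarrow> f lam = 0"
    and T_blin: "\<forall>j. is_blin M ipM M ipM (T j)"
    and gleason: "\<forall>f\<in>M. \<forall>lam. norm lam < 1 \<longrightarrow>
                    f lam - f 0 = (\<Sum>j\<in>UNIV. (lam $ j) *\<^sub>C (T j f) lam)"
    and T_contractive: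
      "\<forall>f\<in>M. (\<Sum>j\<in>UNIV. (hnorm ipM (T j f))\<^sup>2) \<le> (hnorm ipM f)\<^sup>2 - (ynorm (f 0))\<^sup>2"
begin

lemma T_mem [simp]: "f \<in> M \<Longrightarrow> T j f \<in> M"
  using T_blin unfolding is_blin_def by blast

lemma T_add: "f \<in> M \<Longrightarrow> g \<in> M \<Longrightarrow> T j (f + g) = T j f + T j g"
  using T_blin unfolding is_blin_def by blast

lemma T_scaleC: "f \<in> M \<Longrightarrow> T j (a *\<^sub>C f) = a *\<^sub>C T j f"
  using T_blin unfolding is_blin_def by blast

lemma T_zero [simp]: "T j 0 = 0"
  using T_add[of 0 0 j] by simp

lemma T_sum: "(\<And>i. i \<in> A \<Longrightarrow> g i \<in> M) \<Longrightarrow> T j (\<Sum>i\<in>A. g i) = (\<Sum>i\<in>A. T j (g i))"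
  by (induction A rule: infinite_finite_induct) (auto simp: T_add)

lemma contractive:
  assumes "f \<in> M"
  shows "(ynorm (f 0))\<^sup>2 + (\<Sum>j\<in>UNIV. (hnorm ipM (T j f))\<^sup>2) \<le> (hnorm ipM f)\<^sup>2"
proof -
  have "(\<Sum>j\<in>UNIV. (hnorm ipM (T j f))\<^sup>2) \<le> (hnorm ipM f)\<^sup>2 - (ynorm (f 0))\<^sup>2"
    using T_contractive assms by blast
  then show ?thesis
    by linarith
qed

lemma ynorm_eval_0_le:
  assumes f: "f \<in> M"
  shows "ynorm (f 0) \<le> hnorm ipM f"
proof (rule power2_le_imp_le)
  have "0 \<le> (\<Sum>j\<in>UNIV. (hnorm ipM (T j f))\<^sup>2)"
    by (simp add: sum_nonneg)
  then show "(ynorm (f 0))\<^sup>2 \<le> (hnorm ipM f)\<^sup>2"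
    using contractive[OF f] by linarith
qed (use f in simp)

definition T_lam :: "complex^'d \<Rightarrow> (complex^'d \<Rightarrow> 'y) \<Rightarrow> (complex^'d \<Rightarrow> 'y)" where
  "T_lam lam h = (\<Sum>j\<in>UNIV. (lam $ j) *\<^sub>C T j h)"

lemma T_lam_mem [simp]: "h \<in> M \<Longrightarrow> T_lam lam h \<in> M"
  unfolding T_lam_def by simp

lemma T_lam_add: "f \<in> M \<Longrightarrow> g \<in> M \<Longrightarrow> T_lam lam (f + g) = T_lam lam f + T_lam lam g"
  unfolding T_lam_def by (simp add: T_add scaleC_add_right sum.distrib)

lemma hnorm_T_lam_le:
  assumes h: "h \<in> M"
  shows "hnorm ipM (T_lam lam h) \<le> norm lam * hnorm ipM h"
proof -
  have "hnorm ipM (T_lam lam h) \<le> (\<Sum>j\<in>UNIV. cmod (lam $ j) * hnorm ipM (T j h))"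
    using hnorm_sum_le[of UNIV "\<lambda>j. (lam $ j) *\<^sub>C T j h"] h by (simp add: T_lam_def hnorm_scaleC)
  also have "\<dots> \<le> L2_set (\<lambda>j. cmod (lam $ j)) UNIV * L2_set (\<lambda>j. hnorm ipM (T j h)) UNIV"
    using L2_set_mult_ineq[of "\<lambda>j. cmod (lam $ j)" "\<lambda>j. hnorm ipM (T j h)" UNIV] h by simp
  also have "L2_set (\<lambda>j. hnorm ipM (T j h)) UNIV \<le> sqrt ((hnorm ipM h)\<^sup>2)"
    unfolding L2_set_def using contractive[OF h] zero_le_power2[of "ynorm (h 0)"]
    by (intro real_sqrt_le_mono) linarith
  finally show ?thesis
    using h by (simp add: norm_vec_def mult_left_mono)
qed

lemma gleason_T_lam: "h \<in> M \<Longrightarrow> norm lam < 1 \<Longrightarrow> h lam = h 0 + T_lam lam h lam"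
  using gleason unfolding T_lam_def by (force simp: sum_apply algebra_simps)

lemma ex1_resolvent: "h \<in> M \<Longrightarrow> norm lam < 1 \<Longrightarrow> \<exists>!z. z \<in> M \<and> z - T_lam lam z = h"
  by (rule ex1_solution_id_minus[OF T_lam_mem T_lam_add hnorm_T_lam_le]) simp_all

lemma resolvent_eval: "z \<in> M \<Longrightarrow> norm lam < 1 \<Longrightarrow> (z - T_lam lam z) lam = z 0"
  using gleason_T_lam[of z lam] by simp

lemma ynorm_eval_le:
  assumes h: "h \<in> M" and lam: "norm lam < 1"
  shows "ynorm (h lam) \<le> hnorm ipM h / (1 - norm lam)"
proof -
  obtain z where z: "z \<in> M" "z - T_lam lam z = h"
    using ex1_resolvent[OF h lam] by blast
  have "ynorm (h lam) = ynorm (z 0)"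
    using resolvent_eval[OF z(1) lam] z(2) by simp
  also have "\<dots> \<le> hnorm ipM z"
    by (rule ynorm_eval_0_le[OF z(1)])
  also have "\<dots> \<le> hnorm ipM h / (1 - norm lam)"
    using hnorm_le_id_minus[of _ "T_lam lam", OF z(1) T_lam_mem[OF z(1)] hnorm_T_lam_le[OF z(1)] lam] z(2) by simp
  finally show ?thesis .
qed

lemma obs_eval_0_T: "h \<in> M \<Longrightarrow> obs M (\<lambda>f. f 0) T h = h"
proof
  fix lam
  assume h: "h \<in> M"
  show "obs M (\<lambda>f. f 0) T h lam = h lam"
  proof (cases "norm lam < 1")
    case True
    define z where "z = (THE z. z \<in> M \<and> z - (\<Sum>j\<in>UNIV. (lam $ j) *\<^sub>C T j z) = h)"
    have "z \<in> M \<and> z - T_lam lam z = h"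
      using theI'[OF ex1_resolvent[OF h True, unfolded T_lam_def]] unfolding z_def T_lam_def .
    then show ?thesis
      using True resolvent_eval[of z lam] unfolding obs_def z_def[symmetric] by auto
  next
    case False
    then show ?thesis
      using vanish_off_ball h unfolding obs_def by simp
  qed
qed

lemma Qa_eval_0_T: "x \<in> M \<Longrightarrow> Qa M ipM (\<lambda>f. f 0) T x = x"
proof -
  have "{x \<in> M. obs M (\<lambda>f. f 0) T x = 0} = {0}"
    using obs_eval_0_T by auto
  moreover have "orth_compl M ipM {0} = M"
    unfolding orth_compl_def by auto
  ultimately show "x \<in> M \<Longrightarrow> Qa M ipM (\<lambda>f. f 0) T x = x"
    unfolding Qa_def by (simp add: orth_proj_self)
qed

section \<open>Taylor coefficients and their energy\<close>

lemma abel_word_sum_mem [simp]: "f \<in> M \<Longrightarrow> abel_word_sum T f k n \<in> M"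
  by (induction k arbitrary: n) auto

lemma T_lam_power_mem [simp]: "f \<in> M \<Longrightarrow> (T_lam lam ^^ N) f \<in> M"
  by (induction N) auto

lemma hnorm_T_lam_power_le: "f \<in> M \<Longrightarrow> hnorm ipM ((T_lam lam ^^ N) f) \<le> norm lam ^ N * hnorm ipM f"
proof (induction N)
  case (Suc N)
  have "hnorm ipM ((T_lam lam ^^ Suc N) f) \<le> norm lam * hnorm ipM ((T_lam lam ^^ N) f)"
    using hnorm_T_lam_le Suc by simp
  also have "\<dots> \<le> norm lam * (norm lam ^ N * hnorm ipM f)"
    using Suc by (simp add: mult_left_mono)
  finally show ?case by simp
qed simp

lemma T_lam_power:
  assumes f: "f \<in> M"
  shows "(T_lam lam ^^ k) f = (\<Sum>n\<in>indices_of_degree k. mono_pow lam n *\<^sub>C abel_word_sum T f k n)"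
proof (induction k)
  case 0
  show ?case by (simp add: indices_of_degree_0 mono_pow_def scaleC_one)
next
  case (Suc k)
  have "(T_lam lam ^^ Suc k) f
      = (\<Sum>j\<in>UNIV. \<Sum>n\<in>indices_of_degree k. (lam $ j * mono_pow lam n) *\<^sub>C T j (abel_word_sum T f k n))"
    unfolding funpow.simps o_apply Suc T_lam_def using f
    by (simp add: T_sum T_scaleC scaleC_sum_right scaleC_scaleC)
  also have "\<dots> = (\<Sum>n\<in>indices_of_degree k. \<Sum>j\<in>UNIV.
      mono_pow lam (n(j := Suc (n j))) *\<^sub>C T j (abel_word_sum T f k n))"
    by (subst sum.swap) (simp add: mono_pow_fun_upd_Suc)
  also have "\<dots> = (\<Sum>m\<in>indices_of_degree (Suc k). \<Sum>j | 0 < m j.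
      mono_pow lam ((m(j := m j - 1))(j := Suc ((m(j := m j - 1)) j)))
        *\<^sub>C T j (abel_word_sum T f k (m(j := m j - 1))))"
    by (rule sum_indices_of_degree_Suc[symmetric])
  also have "\<dots> = (\<Sum>m\<in>indices_of_degree (Suc k). \<Sum>j | 0 < m j.
      mono_pow lam m *\<^sub>C T j (abel_word_sum T f k (m(j := m j - 1))))"
    by (intro sum.cong refl) (simp add: fun_upd_idem)
  also have "\<dots> = (\<Sum>m\<in>indices_of_degree (Suc k). mono_pow lam m *\<^sub>C abel_word_sum T f (Suc k) m)"
    by (simp add: scaleC_sum_right)
  finally show ?case .
qed

definition taylor_coeff :: "(complex^'d \<Rightarrow> 'y) \<Rightarrow> ('d \<Rightarrow> nat) \<Rightarrow> 'y" where
  "taylor_coeff f n = abel_word_sum T f (sum n UNIV) n 0"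

lemma taylor_coeff_eq: "n \<in> indices_of_degree k \<Longrightarrow> taylor_coeff f n = abel_word_sum T f k n 0"
  by (simp add: taylor_coeff_def indices_of_degree_def)

lemma taylor_remainder:
  assumes f: "f \<in> M" and lam: "norm lam < 1"
  shows "f lam = (\<Sum>k<N. \<Sum>n\<in>indices_of_degree k. mono_pow lam n *\<^sub>C taylor_coeff f n)
                 + (T_lam lam ^^ N) f lam"
proof (induction N)
  case (Suc N)
  have "(T_lam lam ^^ N) f 0 = (\<Sum>n\<in>indices_of_degree N. mono_pow lam n *\<^sub>C taylor_coeff f n)"
    unfolding T_lam_power[OF f] sum_apply by (simp add: taylor_coeff_eq)
  moreover have "(T_lam lam ^^ N) f lam = (T_lam lam ^^ N) f 0 + (T_lam lam ^^ Suc N) f lam"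
    using gleason_T_lam[OF T_lam_power_mem[OF f] lam] by simp
  ultimately show ?case
    using Suc by (simp add: algebra_simps)
qed simp

lemma ynorm_taylor_remainder_le:
  assumes f: "f \<in> M" and lam: "norm lam < 1"
  shows "ynorm (f lam - (\<Sum>n\<in>indices_below_degree N. mono_pow lam n *\<^sub>C taylor_coeff f n))
           \<le> norm lam ^ N * hnorm ipM f / (1 - norm lam)"
proof -
  have "f lam - (\<Sum>n\<in>indices_below_degree N. mono_pow lam n *\<^sub>C taylor_coeff f n)
      = (T_lam lam ^^ N) f lam"
    using taylor_remainder[OF f lam, of N] by (simp add: sum_indices_below_degree)
  moreover have "ynorm ((T_lam lam ^^ N) f lam) \<le> hnorm ipM ((T_lam lam ^^ N) f) / (1 - norm lam)"
    using ynorm_eval_le[OF T_lam_power_mem[OF f] lam] .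
  moreover have "\<dots> \<le> norm lam ^ N * hnorm ipM f / (1 - norm lam)"
    using hnorm_T_lam_power_le[OF f] lam by (simp add: divide_right_mono)
  ultimately show ?thesis
    by simp
qed

definition energy :: "(complex^'d \<Rightarrow> 'y) \<Rightarrow> nat \<Rightarrow> real" where
  "energy f k = (\<Sum>n\<in>indices_of_degree k. mfact_ratio n * (hnorm ipM (abel_word_sum T f k n))\<^sup>2)"

text \<open>Weighted Cauchy--Schwarz with weights \<open>m\<^sub>j\<close>, which sum to \<open>|m|\<close>.\<close>

lemma energy_term_le:
  assumes f: "f \<in> M" and m: "m \<in> indices_of_degree (Suc k)"
  shows "mfact_ratio m * (hnorm ipM (abel_word_sum T f (Suc k) m))\<^sup>2
     \<le> (\<Sum>j | 0 < m j. mfact_ratio (m(j := m j - 1))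
                         * (hnorm ipM (T j (abel_word_sum T f k (m(j := m j - 1)))))\<^sup>2)"
proof -
  define J where "J = {j. 0 < m j}"
  define a where "a j = hnorm ipM (T j (abel_word_sum T f k (m(j := m j - 1))))" for j
  have "hnorm ipM (abel_word_sum T f (Suc k) m) \<le> (\<Sum>j\<in>J. a j)"
    unfolding abel_word_sum.simps(2) J_def a_def using f by (intro hnorm_sum_le) simp
  then have "(hnorm ipM (abel_word_sum T f (Suc k) m))\<^sup>2 \<le> (\<Sum>j\<in>J. a j)\<^sup>2"
    using f by (intro power_mono) simp_all
  also have "\<dots> \<le> (\<Sum>j\<in>J. real (m j)) * (\<Sum>j\<in>J. (a j)\<^sup>2 / real (m j))"
    by (rule weighted_sum_power2_le) (simp add: J_def)
  also have "(\<Sum>j\<in>J. real (m j)) = real (Suc k)"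
    using sum_positive_entries[of m] m unfolding J_def indices_of_degree_def
    by (simp flip: of_nat_sum)
  finally have "mfact_ratio m * (hnorm ipM (abel_word_sum T f (Suc k) m))\<^sup>2
      \<le> mfact_ratio m * (real (Suc k) * (\<Sum>j\<in>J. (a j)\<^sup>2 / real (m j)))"
    by (simp add: mult_left_mono)
  also have "\<dots> = (\<Sum>j\<in>J. mfact_ratio m * real (Suc k) / real (m j) * (a j)\<^sup>2)"
    by (simp add: sum_distrib_left field_simps)
  also have "\<dots> = (\<Sum>j\<in>J. mfact_ratio (m(j := m j - 1)) * (a j)\<^sup>2)"
  proof (rule sum.cong[OF refl])
    fix j
    assume j: "j \<in> J"
    have "mfact_ratio m * real (Suc k) = mfact_ratio (m(j := m j - 1)) * real (m j)"
      using mfact_ratio_fun_upd_pred[of m j] j m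
      by (simp add: J_def indices_of_degree_def del: of_nat_sum)
    then show "mfact_ratio m * real (Suc k) / real (m j) * (a j)\<^sup>2
        = mfact_ratio (m(j := m j - 1)) * (a j)\<^sup>2"
      using j by (simp add: J_def field_simps)
  qed
  finally show ?thesis
    unfolding J_def a_def .
qed

lemma energy_Suc_le:
  assumes f: "f \<in> M"
  shows "energy f (Suc k) + (\<Sum>n\<in>indices_of_degree k. mfact_ratio n * (ynorm (taylor_coeff f n))\<^sup>2)
           \<le> energy f k"
proof -
  have "energy f (Suc k) \<le> (\<Sum>m\<in>indices_of_degree (Suc k). \<Sum>j | 0 < m j.
      mfact_ratio (m(j := m j - 1)) * (hnorm ipM (T j (abel_word_sum T f k (m(j := m j - 1)))))\<^sup>2)"
    unfolding energy_def by (intro sum_mono energy_term_le f)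
  also have "\<dots> = (\<Sum>n\<in>indices_of_degree k. \<Sum>j\<in>UNIV.
      mfact_ratio n * (hnorm ipM (T j (abel_word_sum T f k n)))\<^sup>2)"
    by (rule sum_indices_of_degree_Suc[where
          g = "\<lambda>n j. mfact_ratio n * (hnorm ipM (T j (abel_word_sum T f k n)))\<^sup>2"])
  also have "\<dots> = (\<Sum>n\<in>indices_of_degree k. mfact_ratio n
      * (\<Sum>j\<in>UNIV. (hnorm ipM (T j (abel_word_sum T f k n)))\<^sup>2))"
    by (simp add: sum_distrib_left)
  also have "\<dots> \<le> (\<Sum>n\<in>indices_of_degree k. mfact_ratio n
      * ((hnorm ipM (abel_word_sum T f k n))\<^sup>2 - (ynorm (taylor_coeff f n))\<^sup>2))"
  proof (intro sum_mono mult_left_mono)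
    fix n :: "'d \<Rightarrow> nat"
    assume n: "n \<in> indices_of_degree k"
    show "(\<Sum>j\<in>UNIV. (hnorm ipM (T j (abel_word_sum T f k n)))\<^sup>2)
        \<le> (hnorm ipM (abel_word_sum T f k n))\<^sup>2 - (ynorm (taylor_coeff f n))\<^sup>2"
      using contractive[OF abel_word_sum_mem[OF f], of k n] taylor_coeff_eq[OF n, of f] by simp
  qed (simp add: less_imp_le)
  also have "\<dots> = energy f k - (\<Sum>n\<in>indices_of_degree k. mfact_ratio n * (ynorm (taylor_coeff f n))\<^sup>2)"
    unfolding energy_def by (simp add: sum_subtractf right_diff_distrib)
  finally show ?thesis
    by simp
qed

lemma taylor_energy_le:
  assumes f: "f \<in> M"
  shows "(\<Sum>n\<in>indices_below_degree N. mfact_ratio n * (ynorm (taylor_coeff f n))\<^sup>2) \<le> (hnorm ipM f)\<^sup>2"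
proof -
  have "(\<Sum>k<N. \<Sum>n\<in>indices_of_degree k. mfact_ratio n * (ynorm (taylor_coeff f n))\<^sup>2) + energy f N
      \<le> energy f 0"
  proof (induction N)
    case (Suc N)
    then show ?case
      using energy_Suc_le[OF f, of N] by simp
  qed simp
  moreover have "0 \<le> energy f N"
    unfolding energy_def by (intro sum_nonneg mult_nonneg_nonneg) (simp_all add: less_imp_le mfact_ratio_pos)
  moreover have "energy f 0 = (hnorm ipM f)\<^sup>2"
    by (simp add: energy_def indices_of_degree_0 mfact_ratio_def)
  ultimately show ?thesis
    by (simp add: sum_indices_below_degree)
qed

lemma taylor_energy_degree_le:
  assumes f: "f \<in> M"
  shows "(\<Sum>n\<in>indices_of_degree k. mfact_ratio n * (ynorm (taylor_coeff f n))\<^sup>2) \<le> (hnorm ipM f)\<^sup>2"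
proof -
  have "indices_of_degree k \<subseteq> indices_below_degree (Suc k)"
    by (auto simp: indices_below_degree_def indices_of_degree_def)
  then have "(\<Sum>n\<in>indices_of_degree k. mfact_ratio n * (ynorm (taylor_coeff f n))\<^sup>2)
      \<le> (\<Sum>n\<in>indices_below_degree (Suc k). mfact_ratio n * (ynorm (taylor_coeff f n))\<^sup>2)"
    by (intro sum_mono2) (auto simp: less_imp_le mfact_ratio_pos)
  also have "\<dots> \<le> (hnorm ipM f)\<^sup>2"
    by (rule taylor_energy_le[OF f])
  finally show ?thesis .
qed

lemma cmod_mono_pow_power2: "(cmod (mono_pow lam n))\<^sup>2 = (\<Prod>j\<in>UNIV. ((cmod (lam $ j))\<^sup>2) ^ n j)"
proof -
  have "(cmod (mono_pow lam n))\<^sup>2 = (\<Prod>j\<in>UNIV. (cmod (lam $ j) ^ n j)\<^sup>2)"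
    unfolding mono_pow_def by (simp add: prod_norm[symmetric] norm_power prod_power_distrib)
  then show ?thesis
    by (simp add: power_mult[symmetric] mult.commute)
qed

text \<open>Cauchy--Schwarz against the multinomial identity.\<close>

lemma sum_ynorm_taylor_terms_le:
  assumes f: "f \<in> M"
  shows "(\<Sum>n\<in>indices_of_degree k. ynorm (mono_pow lam n *\<^sub>C taylor_coeff f n))
           \<le> norm lam ^ k * hnorm ipM f"
proof (rule power2_le_imp_le)
  let ?w = "\<lambda>n. cmod (mono_pow lam n) / sqrt (mfact_ratio n)"
  let ?c = "\<lambda>n. sqrt (mfact_ratio n) * ynorm (taylor_coeff f n)"
  have "(\<Sum>n\<in>indices_of_degree k. ynorm (mono_pow lam n *\<^sub>C taylor_coeff f n))
      = (\<Sum>n\<in>indices_of_degree k. ?w n * ?c n)"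
    by (intro sum.cong refl) (simp add: ynorm_scaleC less_imp_le)
  then have "(\<Sum>n\<in>indices_of_degree k. ynorm (mono_pow lam n *\<^sub>C taylor_coeff f n))\<^sup>2
      \<le> (\<Sum>n\<in>indices_of_degree k. (?w n)\<^sup>2) * (\<Sum>n\<in>indices_of_degree k. (?c n)\<^sup>2)"
    by (simp only:) (rule Cauchy_Schwarz_ineq_sum)
  also have "(\<Sum>n\<in>indices_of_degree k. (?w n)\<^sup>2)
      = (\<Sum>n\<in>indices_of_degree k. (\<Prod>j\<in>UNIV. ((cmod (lam $ j))\<^sup>2) ^ n j) / mfact_ratio n)"
    by (intro sum.cong refl) (simp add: power_divide cmod_mono_pow_power2 less_imp_le)
  also have "\<dots> = ((norm lam)\<^sup>2) ^ k"
    by (simp add: multinomial_sum norm_vec_power2)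
  also have "(\<Sum>n\<in>indices_of_degree k. (?c n)\<^sup>2)
      = (\<Sum>n\<in>indices_of_degree k. mfact_ratio n * (ynorm (taylor_coeff f n))\<^sup>2)"
    by (simp add: power_mult_distrib less_imp_le)
  also have "((norm lam)\<^sup>2) ^ k * \<dots> \<le> ((norm lam)\<^sup>2) ^ k * (hnorm ipM f)\<^sup>2"
    by (intro mult_left_mono taylor_energy_degree_le f) simp
  finally show "(\<Sum>n\<in>indices_of_degree k. ynorm (mono_pow lam n *\<^sub>C taylor_coeff f n))\<^sup>2
      \<le> (norm lam ^ k * hnorm ipM f)\<^sup>2"
    by (simp add: power_mult_distrib power_mult[symmetric] mult.commute)
qed (simp add: f)

lemma ynorm_taylor_tail_le:
  assumes f: "f \<in> M" and lam: "norm lam < 1"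
    and H: "finite H" "H \<inter> indices_below_degree N = {}"
  shows "ynorm (\<Sum>n\<in>H. mono_pow lam n *\<^sub>C taylor_coeff f n) \<le> norm lam ^ N * hnorm ipM f / (1 - norm lam)"
proof -
  obtain K where "(\<Sum>n\<in>H. ynorm (mono_pow lam n *\<^sub>C taylor_coeff f n))
      \<le> (\<Sum>k=N..<K. \<Sum>n\<in>indices_of_degree k. ynorm (mono_pow lam n *\<^sub>C taylor_coeff f n))"
    using sum_outside_indices_below_degree_le[OF H] by fastforce
  also have "\<dots> \<le> (\<Sum>k=N..<K. norm lam ^ k) * hnorm ipM f"
    unfolding sum_distrib_right by (intro sum_mono sum_ynorm_taylor_terms_le f)
  also have "\<dots> \<le> norm lam ^ N / (1 - norm lam) * hnorm ipM f"
    using lam f by (intro mult_right_mono geometric_sum_le) simp_all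
  finally show ?thesis
    using ynorm_sum_le order_trans by fastforce
qed

lemma taylor_yhas_sum:
  assumes f: "f \<in> M" and lam: "norm lam < 1"
  shows "yhas_sum (\<lambda>n. mono_pow lam n *\<^sub>C taylor_coeff f n) UNIV (f lam)"
  unfolding yhas_sum_def
proof (intro allI impI)
  fix e :: real
  assume "e > 0"
  define a where "a n = mono_pow lam n *\<^sub>C taylor_coeff f n" for n
  define r where "r N = norm lam ^ N * hnorm ipM f / (1 - norm lam)" for N
  have "r \<longlonglongrightarrow> 0"
    using lam unfolding r_def by (intro tendsto_divide_zero tendsto_mult_left_zero LIMSEQ_power_zero) auto
  then obtain N where N: "r N < e / 2"
    using \<open>e > 0\<close> by (metis half_gt_zero order_tendstoD(2) eventually_sequentially order_refl)
  have "ynorm (sum a G - f lam) < e"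
    if G: "finite G" "indices_below_degree N \<subseteq> G" for G
  proof -
    have "sum a G - f lam = sum a (G - indices_below_degree N) - (f lam - sum a (indices_below_degree N))"
      using G by (simp add: sum.subset_diff[of "indices_below_degree N" G])
    then have "ynorm (sum a G - f lam)
        \<le> ynorm (sum a (G - indices_below_degree N)) + ynorm (f lam - sum a (indices_below_degree N))"
      using ynorm_triangle ynorm_minus_commute by (metis diff_conv_add_uminus minus_diff_eq)
    also have "\<dots> \<le> r N + r N"
      using ynorm_taylor_tail_le[OF f lam, of "G - indices_below_degree N" N]
        ynorm_taylor_remainder_le[OF f lam, of N] G
      unfolding a_def r_def by (intro add_mono) auto
    finally show ?thesis
      using N by simp
  qed
  then show "\<exists>F. finite F \<and> F \<subseteq> UNIV \<and>
      (\<forall>G. finite G \<and> F \<subseteq> G \<and> G \<subseteq> UNIV \<longrightarrow> ynorm (sum a G - f lam) < e)"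
    by (intro exI[of _ "indices_below_degree N"]) auto
qed

lemma taylor_coeff_summable:
  assumes f: "f \<in> M"
  shows "(\<lambda>n. mfact_ratio n * (ynorm (taylor_coeff f n))\<^sup>2) summable_on UNIV"
    and "(\<Sum>\<^sub>\<infinity>n. mfact_ratio n * (ynorm (taylor_coeff f n))\<^sup>2) \<le> (hnorm ipM f)\<^sup>2"
proof -
  have nonneg: "0 \<le> mfact_ratio n * (ynorm (taylor_coeff f n))\<^sup>2" for n
    by (simp add: mfact_ratio_pos less_imp_le)
  have finite_le: "(\<Sum>n\<in>F. mfact_ratio n * (ynorm (taylor_coeff f n))\<^sup>2) \<le> (hnorm ipM f)\<^sup>2"
    if "finite F" for F
  proof -
    obtain N where "F \<subseteq> indices_below_degree N"
      using finite_subset_indices_below_degree[OF \<open>finite F\<close>] by blast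
    then have "(\<Sum>n\<in>F. mfact_ratio n * (ynorm (taylor_coeff f n))\<^sup>2)
        \<le> (\<Sum>n\<in>indices_below_degree N. mfact_ratio n * (ynorm (taylor_coeff f n))\<^sup>2)"
      by (intro sum_mono2 nonneg) auto
    also have "\<dots> \<le> (hnorm ipM f)\<^sup>2"
      by (rule taylor_energy_le[OF f])
    finally show ?thesis .
  qed
  show summable: "(\<lambda>n. mfact_ratio n * (ynorm (taylor_coeff f n))\<^sup>2) summable_on UNIV"
    by (rule nonneg_bdd_above_summable_on) (use nonneg finite_le in \<open>auto intro!: bdd_aboveI\<close>)
  show "(\<Sum>\<^sub>\<infinity>n. mfact_ratio n * (ynorm (taylor_coeff f n))\<^sup>2) \<le> (hnorm ipM f)\<^sup>2"
    by (rule infsum_le_finite_sums[OF summable finite_le])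
qed

lemma arv_rep_taylor_coeff: "f \<in> M \<Longrightarrow> arv_rep f (taylor_coeff f)"
  unfolding arv_rep_def using taylor_coeff_summable(1) taylor_yhas_sum vanish_off_ball by blast

lemma arv_norm_le:
  assumes f: "f \<in> M"
  shows "arv_norm f \<le> hnorm ipM f"
proof -
  have "(THE c. arv_rep f c) = taylor_coeff f"
    using arv_rep_taylor_coeff[OF f] arv_rep_unique by blast
  then have "arv_norm f = sqrt (\<Sum>\<^sub>\<infinity>n. mfact_ratio n * (ynorm (taylor_coeff f n))\<^sup>2)"
    by (simp add: arv_norm_def)
  also have "\<dots> \<le> sqrt ((hnorm ipM f)\<^sup>2)"
    using taylor_coeff_summable(2)[OF f] by (rule real_sqrt_le_mono)
  finally show ?thesis
    using f by simp
qed

end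

theorem theorem3p21:
  fixes M :: "(complex^'d::finite \<Rightarrow> 'y::chilbert) set"
    and ipM :: "(complex^'d \<Rightarrow> 'y) \<Rightarrow> (complex^'d \<Rightarrow> 'y) \<Rightarrow> complex"
    and T :: "'d \<Rightarrow> (complex^'d \<Rightarrow> 'y) \<Rightarrow> (complex^'d \<Rightarrow> 'y)"
  assumes hilb: "is_hilbert M ipM"
    and on_ball: "\<forall>f\<in>M. \<forall>lam. \<not> norm lam < 1 \<longrightarrow> f lam = 0"
    and T_bdd: "\<forall>j. is_blin M ipM M ipM (T j)"
    and T_shift: "\<forall>f\<in>M. \<forall>lam. norm lam < 1 \<longrightarrow>
                    f lam - f 0 = (\<Sum>j\<in>UNIV. (lam $ j) *\<^sub>C (T j f) lam)"
    and T_contr: "\<forall>f\<in>M. (\<Sum>j\<in>UNIV. (hnorm ipM (T j f))\<^sup>2) \<le> (hnorm ipM f)\<^sup>2 - (ynorm (f 0))\<^sup>2"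
  shows "(\<exists>(X :: (complex^'d \<Rightarrow> 'y) set) ipX (C :: (complex^'d \<Rightarrow> 'y) \<Rightarrow> 'y) A.
             is_hilbert X ipX \<and> is_blin X ipX UNIV cinner C
           \<and> (\<forall>j. is_blin X ipX X ipX (A j)) \<and> contractive_pair X ipX C A
           \<and> M = obs X C A ` X
           \<and> (\<forall>x\<in>X. hnorm ipM (obs X C A x) = hnorm ipX (Qa X ipX C A x)))
       \<and> M \<subseteq> arveson \<and> (\<forall>f\<in>M. arv_norm f \<le> hnorm ipM f)"
proof -
  interpret contractive_gleason M ipM T
    using assms by (simp add: contractive_gleason_def contractive_gleason_axioms_def hilbert_on_def)
  have "is_blin M ipM UNIV cinner (\<lambda>f. f 0)"
    using ynorm_eval_0_le unfolding is_blin_def ynorm_def by (auto intro: exI[of _ 1])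
  moreover have "contractive_pair M ipM (\<lambda>f. f 0) T"
    unfolding contractive_pair_def using contractive by simp
  moreover have "M = obs M (\<lambda>f. f 0) T ` M"
    using obs_eval_0_T by (auto simp: image_iff)
  moreover have "\<forall>x\<in>M. hnorm ipM (obs M (\<lambda>f. f 0) T x) = hnorm ipM (Qa M ipM (\<lambda>f. f 0) T x)"
    using obs_eval_0_T Qa_eval_0_T by simp
  moreover have "M \<subseteq> arveson"
    unfolding arveson_def using arv_rep_taylor_coeff by blast
  ultimately show ?thesis
    using hilb T_bdd arv_norm_le by blast
qed

end
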